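(* Let $G$ be a finite group and let $\mathbf{O}(\underline{\mathbf{Set}})$ be the set of exponents consisting, for each $H\subseteq G$, of all orbits $H/K$ with $K\subsetneq H$ (each with a chosen ordering). There exists a (non-unique) map of operads $\mathcal{SM}_{\mathbf{O}(\underline{\mathbf{Set}})}\to\mathscr{P}_G$, and any such map is a levelwise $(G\times\Sigma_\bullet)$-equivalence: for every $n$ and every subgroup $\Lambda\subseteq G\times\Sigma_n$ the induced functor on $\Lambda$-fixed subcategories is an equivalence of categories.
   Context: For a finite $H$-set $T$ with ordering $\{1,\dots,|T|\}\cong T$, $\sigma:H\to\Sigma_{|T|}$ is its permutation representation and $\Gamma_T=\{(h,\sigma(h))\}\subseteq G\times\Sigma_{|T|}$. For a set $X$, $\widetilde X$ denotes the chaotic category with object set $X$ and exactly one morphism between any two objects (applied levelwise to operads in $G$-sets gives operads in $G$-categories). For a set of exponents $\mathcal{N}$, $\mathcal{SM}_{\mathcal{N}}=\widetilde{\mathbb{F}(S_{\mathcal{N}})}$, where $\mathbb{F}$ is the free operad functor on symmetric sequences of $G$-sets and $S_{\mathcal{N}}=(G\times\Sigma_0)/\Gamma_\varnothing\sqcup(G\times\Sigma_2)/\Gamma_{**}\sqcup\coprod_{T\in\mathcal{N}}(G\times\Sigma_{|T|})/\Gamma_T$ ($\varnothing$, $**$ trivial). The $G$-permutativity operad is $\mathscr{P}_G=\widetilde{\mathbf{Set}(G,\Sigma_\bullet)}$: level $n$ is the chaotic category on the set of functions $f:G\to\Sigma_n$, with $(g,\tau)\cdot f = (x\mapsto\tau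 f(g^{-1}x))$, and operad structure given pointwise by that of the associative operad ($\Sigma_\bullet$ with block-permutation composition); equivalently $\mathscr{P}_G=\mathbf{Fun}(\widetilde G,\mathscr{P})$ with $\mathscr{P}=\widetilde{\Sigma_\bullet}$ the Barratt–Eccles operad. *)

theory Defs
  imports "HOL-Algebra.Coset" "HOL-Combinatorics.Permutations" "HOL-Library.FuncSet"
begin

record ('o,'m) cat =
  obj :: "'o set"
  hom :: "'o \<Rightarrow> 'o \<Rightarrow> 'm set"
  idm :: "'o \<Rightarrow> 'm"
  cmp :: "'m \<Rightarrow> 'm \<Rightarrow> 'm"   (* cmp g f = g after f *)

definition chaotic :: "'o set \<Rightarrow> ('o, 'o \<times> 'o) cat" where
  "chaotic X = \<lparr> obj = X,
                 hom = (\<lambda>x y. if x \<in> X \<and> y \<in> X then {(x,y)} else {}),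
                 idm = (\<lambda>x. (x,x)),
                 cmp = (\<lambda>g f. (fst f, snd g)) \<rparr>"

definition is_functor :: "('o,'m) cat \<Rightarrow> ('p,'n) cat \<Rightarrow> ('o \<Rightarrow> 'p) \<Rightarrow> ('m \<Rightarrow> 'n) \<Rightarrow> bool" where
  "is_functor C D Fo Fm \<longleftrightarrow>
     (\<forall>x\<in>obj C. Fo x \<in> obj D) \<and>
     (\<forall>x\<in>obj C. \<forall>y\<in>obj C. \<forall>f\<in>hom C x y. Fm f \<in> hom D (Fo x) (Fo y)) \<and>
     (\<forall>x\<in>obj C. Fm (idm C x) = idm D (Fo x)) \<and>
     (\<forall>x\<in>obj C. \<forall>y\<in>obj C. \<forall>z\<in>obj C. \<forall>f\<in>hom C x y. \<forall>g\<in>hom C y z.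
        Fm (cmp C g f) = cmp D (Fm g) (Fm f))"

definition is_iso :: "('o,'m) cat \<Rightarrow> 'o \<Rightarrow> 'o \<Rightarrow> 'm \<Rightarrow> bool" where
  "is_iso D a b f \<longleftrightarrow> f \<in> hom D a b \<and>
     (\<exists>g\<in>hom D b a. cmp D g f = idm D a \<and> cmp D f g = idm D b)"

definition is_equivalence :: "('o,'m) cat \<Rightarrow> ('p,'n) cat \<Rightarrow> ('o \<Rightarrow> 'p) \<Rightarrow> ('m \<Rightarrow> 'n) \<Rightarrow> bool" where
  "is_equivalence C D Fo Fm \<longleftrightarrow>
     is_functor C D Fo Fm \<and>
     (\<forall>x\<in>obj C. \<forall>y\<in>obj C. \<forall>g\<in>hom D (Fo x) (Fo y). \<exists>f\<in>hom C x y. Fm f = g) \<and>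
     (\<forall>x\<in>obj C. \<forall>y\<in>obj C. inj_on Fm (hom C x y)) \<and>
     (\<forall>d\<in>obj D. \<exists>c\<in>obj C. \<exists>f. is_iso D (Fo c) d f)"

definition fixsub :: "('o,'m) cat \<Rightarrow> ('l \<Rightarrow> 'o \<Rightarrow> 'o) \<Rightarrow> ('l \<Rightarrow> 'm \<Rightarrow> 'm) \<Rightarrow> 'l set \<Rightarrow> ('o,'m) cat" where
  "fixsub C acto actm \<Lambda> = \<lparr> obj = {x \<in> obj C. \<forall>l\<in>\<Lambda>. acto l x = x},
      hom = (\<lambda>x y. {m \<in> hom C x y. \<forall>l\<in>\<Lambda>. actm l m = m}),
      idm = idm C, cmp = cmp C \<rparr>"

definition perms :: "nat \<Rightarrow> (nat \<Rightarrow> nat) set" where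
  "perms n = {\<sigma>. \<sigma> permutes {..<n}}"

definition subgroup_GS :: "('g,'b) monoid_scheme \<Rightarrow> nat \<Rightarrow> ('g \<times> (nat \<Rightarrow> nat)) set \<Rightarrow> bool" where
  "subgroup_GS G n \<Lambda> \<longleftrightarrow> \<Lambda> \<subseteq> carrier G \<times> perms n \<and> (\<one>\<^bsub>G\<^esub>, id) \<in> \<Lambda> \<and>
     (\<forall>(a,\<sigma>)\<in>\<Lambda>. \<forall>(b,\<rho>)\<in>\<Lambda>. (a \<otimes>\<^bsub>G\<^esub> b, \<sigma> \<circ> \<rho>) \<in> \<Lambda>) \<and>
     (\<forall>(a,\<sigma>)\<in>\<Lambda>. (inv\<^bsub>G\<^esub> a, Hilbert_Choice.inv \<sigma>) \<in> \<Lambda>)"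

definition cosets_GS :: "('g,'b) monoid_scheme \<Rightarrow> nat \<Rightarrow> ('g \<times> (nat \<Rightarrow> nat)) set
                          \<Rightarrow> ('g \<times> (nat \<Rightarrow> nat)) set set" where
  "cosets_GS G k \<Gamma> = {{(a \<otimes>\<^bsub>G\<^esub> h, \<sigma> \<circ> \<rho>) | h \<rho>. (h,\<rho>) \<in> \<Gamma>} | a \<sigma>. a \<in> carrier G \<and> \<sigma> \<in> perms k}"

definition coset_act :: "('g,'b) monoid_scheme \<Rightarrow> 'g \<times> (nat \<Rightarrow> nat)
                          \<Rightarrow> ('g \<times> (nat \<Rightarrow> nat)) set \<Rightarrow> ('g \<times> (nat \<Rightarrow> nat)) set" where
  "coset_act G l c = {(fst l \<otimes>\<^bsub>G\<^esub> b, snd l \<circ> \<rho>) | b \<rho>. (b,\<rho>) \<in> c}"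

section \<open>The set of exponents O(Set) and the generating symmetric sequence S_N\<close>

text \<open>Exponents: E0 = the empty G-set, E2 = the trivial G-set with two points,
  EO H K = the H-set H/K (H, K subgroups of G, K properly contained in H).\<close>
datatype 'g expo = E0 | E2 | EO "'g set" "'g set"

definition lcos :: "('g,'b) monoid_scheme \<Rightarrow> 'g set \<Rightarrow> 'g set \<Rightarrow> 'g set set" where
  "lcos G H K = (\<lambda>h. h <#\<^bsub>G\<^esub> K) ` H"

definition expos :: "('g,'b) monoid_scheme \<Rightarrow> 'g expo set" where
  "expos G = {E0, E2} \<union> {EO H K | H K. subgroup H G \<and> subgroup K G \<and> K \<subset> H}"

fun arity :: "('g,'b) monoid_scheme \<Rightarrow> 'g expo \<Rightarrow> nat" where
  "arity G E0 = 0"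
| "arity G E2 = 2"
| "arity G (EO H K) = card (lcos G H K)"

text \<open>Orderings: ord H K is a chosen bijection {0..<|H/K|} \<cong> H/K.\<close>
type_synonym 'g ordering = "'g set \<Rightarrow> 'g set \<Rightarrow> nat \<Rightarrow> 'g set"

definition orderings_ok :: "('g,'b) monoid_scheme \<Rightarrow> 'g ordering \<Rightarrow> bool" where
  "orderings_ok G ord \<longleftrightarrow> (\<forall>H K. subgroup H G \<and> subgroup K G \<and> K \<subset> H \<longrightarrow>
      bij_betw (ord H K) {..<card (lcos G H K)} (lcos G H K))"

definition permrep :: "('g,'b) monoid_scheme \<Rightarrow> 'g ordering \<Rightarrow> 'g set \<Rightarrow> 'g set \<Rightarrow> 'g \<Rightarrow> nat \<Rightarrow> nat" where
  "permrep G ord H K h = (\<lambda>i. if i < card (lcos G H K)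
       then (THE j. j < card (lcos G H K) \<and> ord H K j = h <#\<^bsub>G\<^esub> ord H K i) else i)"

fun Gamma :: "('g,'b) monoid_scheme \<Rightarrow> 'g ordering \<Rightarrow> 'g expo \<Rightarrow> ('g \<times> (nat \<Rightarrow> nat)) set" where
  "Gamma G ord E0 = carrier G \<times> {id}"
| "Gamma G ord E2 = carrier G \<times> {id}"
| "Gamma G ord (EO H K) = {(h, permrep G ord H K h) | h. h \<in> H}"

type_synonym 'g gen = "'g expo \<times> ('g \<times> (nat \<Rightarrow> nat)) set"

text \<open>S_N(k) = disjoint union over exponents T of arity k of (G \<times> \<Sigma>_k)/\<Gamma>_T.\<close>
definition gens :: "('g,'b) monoid_scheme \<Rightarrow> 'g ordering \<Rightarrow> nat \<Rightarrow> 'g gen set" where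
  "gens G ord k = {(e, c) | e c. e \<in> expos G \<and> arity G e = k \<and> c \<in> cosets_GS G k (Gamma G ord e)}"

definition gen_act :: "('g,'b) monoid_scheme \<Rightarrow> 'g \<times> (nat \<Rightarrow> nat) \<Rightarrow> 'g gen \<Rightarrow> 'g gen" where
  "gen_act G l s = (fst s, coset_act G l (snd s))"

section \<open>The free operad F(S_N) in G-sets\<close>

datatype 's tree = Leaf nat | Node 's "'s tree list"

fun leaves :: "'s tree \<Rightarrow> nat list" where
  "leaves (Leaf i) = [i]"
| "leaves (Node s cs) = concat (map leaves cs)"

fun nodes_ok :: "(nat \<Rightarrow> 's set) \<Rightarrow> 's tree \<Rightarrow> bool" where
  "nodes_ok S (Leaf i) = True"
| "nodes_ok S (Node s cs) = (s \<in> S (length cs) \<and> (\<forall>c\<in>set cs. nodes_ok S c))"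

definition wft :: "(nat \<Rightarrow> 's set) \<Rightarrow> nat \<Rightarrow> 's tree \<Rightarrow> bool" where
  "wft S n t \<longleftrightarrow> nodes_ok S t \<and> distinct (leaves t) \<and> set (leaves t) = {..<n}"

fun relabel :: "(nat \<Rightarrow> nat) \<Rightarrow> 's tree \<Rightarrow> 's tree" where
  "relabel f (Leaf i) = Leaf (f i)"
| "relabel f (Node s cs) = Node s (map (relabel f) cs)"

fun maplab :: "('s \<Rightarrow> 's) \<Rightarrow> 's tree \<Rightarrow> 's tree" where
  "maplab f (Leaf i) = Leaf i"
| "maplab f (Node s cs) = Node (f s) (map (maplab f) cs)"

fun subst :: "'s tree \<Rightarrow> nat list \<Rightarrow> 's tree list \<Rightarrow> 's tree" where
  "subst (Leaf j) ns ts = relabel (\<lambda>i. sum_list (take j ns) + i) (ts ! j)"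
| "subst (Node s cs) ns ts = Node s (map (\<lambda>c. subst c ns ts) cs)"

text \<open>The congruence identifying Node (\<sigma>\<cdot>s) [c_0..c_{k-1}] with Node s [c_{\<sigma> 0}..c_{\<sigma>(k-1)}]
  (equivariance of the generators).\<close>
inductive teq :: "(nat \<Rightarrow> 's set) \<Rightarrow> ((nat \<Rightarrow> nat) \<Rightarrow> 's \<Rightarrow> 's) \<Rightarrow> 's tree \<Rightarrow> 's tree \<Rightarrow> bool"
  for S and act where
  teq_refl: "teq S act t t"
| teq_sym: "teq S act t u \<Longrightarrow> teq S act u t"
| teq_trans: "teq S act t u \<Longrightarrow> teq S act u v \<Longrightarrow> teq S act t v"
| teq_cong: "list_all2 (teq S act) cs ds \<Longrightarrow> teq S act (Node s cs) (Node s ds)"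
| teq_equiv: "s \<in> S k \<Longrightarrow> \<sigma> \<in> perms k \<Longrightarrow> length cs = k \<Longrightarrow>
     teq S act (Node (act \<sigma> s) cs) (Node s (map (\<lambda>i. cs ! \<sigma> i) [0..<k]))"
monos list.rel_mono

definition teqG :: "('g,'b) monoid_scheme \<Rightarrow> 'g ordering \<Rightarrow> 'g gen tree \<Rightarrow> 'g gen tree \<Rightarrow> bool" where
  "teqG G ord = teq (gens G ord) (\<lambda>\<sigma>. gen_act G (\<one>\<^bsub>G\<^esub>, \<sigma>))"

definition cls :: "('g,'b) monoid_scheme \<Rightarrow> 'g ordering \<Rightarrow> 'g gen tree \<Rightarrow> 'g gen tree set" where
  "cls G ord t = {u. teqG G ord u t}"

definition FO :: "('g,'b) monoid_scheme \<Rightarrow> 'g ordering \<Rightarrow> nat \<Rightarrow> 'g gen tree set set" where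
  "FO G ord n = {cls G ord t | t. wft (gens G ord) n t}"

definition FO_act :: "('g,'b) monoid_scheme \<Rightarrow> 'g ordering \<Rightarrow> 'g \<times> (nat \<Rightarrow> nat)
                       \<Rightarrow> 'g gen tree set \<Rightarrow> 'g gen tree set" where
  "FO_act G ord l X = {u. \<exists>t\<in>X. teqG G ord u
       (relabel (snd l) (maplab (gen_act G (fst l, id)) t))}"

definition FO_comp :: "('g,'b) monoid_scheme \<Rightarrow> 'g ordering \<Rightarrow> 'g gen tree set \<Rightarrow> nat list
                        \<Rightarrow> 'g gen tree set list \<Rightarrow> 'g gen tree set" where
  "FO_comp G ord X ns Ys = {u. \<exists>t\<in>X. \<exists>ts. list_all2 (\<in>) ts Ys \<and> teqG G ord u (subst t ns ts)}"

definition FO_unit :: "('g,'b) monoid_scheme \<Rightarrow> 'g ordering \<Rightarrow> 'g gen tree set" where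
  "FO_unit G ord = cls G ord (Leaf 0)"

section \<open>The G-permutativity operad P_G = Set(G, \<Sigma>_\<bullet>) (object level)\<close>

definition PG :: "('g,'b) monoid_scheme \<Rightarrow> nat \<Rightarrow> ('g \<Rightarrow> nat \<Rightarrow> nat) set" where
  "PG G n = carrier G \<rightarrow>\<^sub>E perms n"

definition PG_act :: "('g,'b) monoid_scheme \<Rightarrow> 'g \<times> (nat \<Rightarrow> nat) \<Rightarrow> ('g \<Rightarrow> nat \<Rightarrow> nat) \<Rightarrow> ('g \<Rightarrow> nat \<Rightarrow> nat)" where
  "PG_act G l f = restrict (\<lambda>x. snd l \<circ> f (inv\<^bsub>G\<^esub> (fst l) \<otimes>\<^bsub>G\<^esub> x)) (carrier G)"

text \<open>Associative operad: w \<in> \<Sigma>_k (position \<mapsto> input), block-permutation composition.\<close>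
definition assoc_comp :: "(nat \<Rightarrow> nat) \<Rightarrow> nat list \<Rightarrow> (nat \<Rightarrow> nat) list \<Rightarrow> nat \<Rightarrow> nat" where
  "assoc_comp w ns vs = (let L = concat (map (\<lambda>p. map (\<lambda>q. sum_list (take (w p) ns) + (vs ! (w p)) q)
                                              [0..<ns ! (w p)]) [0..<length ns])
                         in (\<lambda>p. if p < length L then L ! p else p))"

definition PG_comp :: "('g,'b) monoid_scheme \<Rightarrow> ('g \<Rightarrow> nat \<Rightarrow> nat) \<Rightarrow> nat list
                        \<Rightarrow> ('g \<Rightarrow> nat \<Rightarrow> nat) list \<Rightarrow> ('g \<Rightarrow> nat \<Rightarrow> nat)" where
  "PG_comp G f ns fs = restrict (\<lambda>x. assoc_comp (f x) ns (map (\<lambda>h. h x) fs)) (carrier G)"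

definition PG_unit :: "('g,'b) monoid_scheme \<Rightarrow> ('g \<Rightarrow> nat \<Rightarrow> nat)" where
  "PG_unit G = restrict (\<lambda>x. id) (carrier G)"

section \<open>Maps of operads SM_N = chaotic F(S_N) \<rightarrow> P_G\<close>

text \<open>A map of operads between the chaotic G-category operads is given levelwise by functors
  chaotic(FO n) \<rightarrow> chaotic(PG n); such a functor is determined by its object function \<Phi> n
  (the arrow function is forced to be (x,y) \<mapsto> (\<Phi> n x, \<Phi> n y)), and compatibility with the
  operad structure on arrows follows from that on objects.\<close>
definition chaotic_functor :: "('a \<Rightarrow> 'b) \<Rightarrow> 'a \<times> 'a \<Rightarrow> 'b \<times> 'b" where
  "chaotic_functor F = (\<lambda>(x,y). (F x, F y))"

definition operad_map :: "('g,'b) monoid_scheme \<Rightarrow> 'g ordering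
                           \<Rightarrow> (nat \<Rightarrow> 'g gen tree set \<Rightarrow> ('g \<Rightarrow> nat \<Rightarrow> nat)) \<Rightarrow> bool" where
  "operad_map G ord \<Phi> \<longleftrightarrow>
     (\<forall>n. is_functor (chaotic (FO G ord n)) (chaotic (PG G n)) (\<Phi> n) (chaotic_functor (\<Phi> n))) \<and>
     (\<forall>n X a \<tau>. X \<in> FO G ord n \<longrightarrow> a \<in> carrier G \<longrightarrow> \<tau> \<in> perms n \<longrightarrow>
        \<Phi> n (FO_act G ord (a,\<tau>) X) = PG_act G (a,\<tau>) (\<Phi> n X)) \<and>
     (\<forall>X ns Ys. X \<in> FO G ord (length ns) \<longrightarrow> length Ys = length ns \<longrightarrow>
        (\<forall>i<length ns. Ys ! i \<in> FO G ord (ns ! i)) \<longrightarrow>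
        \<Phi> (sum_list ns) (FO_comp G ord X ns Ys) =
          PG_comp G (\<Phi> (length ns) X) ns (map (\<lambda>i. \<Phi> (ns ! i) (Ys ! i)) [0..<length ns])) \<and>
     \<Phi> 1 (FO_unit G ord) = PG_unit G"

end

theory Submission
  imports Defs
begin

(* A generator of S_N of arity k, i.e. a coset (a,\<sigma>)\<Gamma>_T, is sent to the function
  x \<mapsto> \<sigma> \<circ> F_T(a\<inverse>x), where F_T : G \<rightarrow> \<Sigma>_k is a \<Gamma>_T-equivariant map, F_T(h y) = \<sigma>_T(h) F_T(y);
  for T = H/K one takes F_T(y) = \<sigma>_T(y r(y)\<inverse>) with r(y) a representative of the right coset H y.
  A tree is then sent, pointwise in x, to the permutation that reads off its leaves after
  reordering the children of every node by the value of its generator at x.  This respects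
  the equivariance relations, the G \<times> \<Sigma>_n-action and grafting, so it is a map of operads.

  Both operads are chaotic, so an equivariant levelwise map is an equivalence on \<Lambda>-fixed
  subcategories as soon as the source has a \<Lambda>-fixed object whenever the target has one.
  A \<Lambda>-fixed f : G \<rightarrow> \<Sigma>_n forces \<Lambda> \<inter> (1 \<times> \<Sigma>_n) = 1, so \<Lambda> is the graph of an action of a subgroup H
  on {0..<n}.  Each orbit H/K with K \<noteq> H is the leaf set of the \<Lambda>-fixed corolla on the
  generator H/K, a fixed point is a \<Lambda>-fixed leaf, and the binary generator joins the orbits
  (the nullary one covers n = 0). *)

lemma perms_id [simp]: "id \<in> perms k"
  by (simp add: perms_def permutes_id)

lemma perms_comp: "\<sigma> \<in> perms k \<Longrightarrow> \<tau> \<in> perms k \<Longrightarrow> \<sigma> \<circ> \<tau> \<in> perms k"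
  by (simp add: perms_def permutes_compose)

lemma perms_lessThan: "f \<in> perms k \<Longrightarrow> p < k \<Longrightarrow> f p < k"
  unfolding perms_def using permutes_in_image[of f "{..<k}" p] by simp

lemma perms_outside: "f \<in> perms k \<Longrightarrow> \<not> p < k \<Longrightarrow> f p = p"
  unfolding perms_def permutes_def by simp

definition perm_of_list :: "nat \<Rightarrow> nat list \<Rightarrow> nat \<Rightarrow> nat" where
  "perm_of_list n xs = (\<lambda>i. if i < n then xs ! i else i)"

lemma perm_of_list_perms:
  assumes "distinct xs" and "set xs = {..<n}"
  shows "perm_of_list n xs \<in> perms n"
proof -
  have l: "length xs = n" using distinct_card[OF assms(1)] assms(2) by simp
  have "bij_betw (perm_of_list n xs) {..<n} {..<n}"
  proof (rule bij_betw_imageI)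
    show "inj_on (perm_of_list n xs) {..<n}"
      using assms(1) l by (auto simp: inj_on_def nth_eq_iff_index_eq perm_of_list_def)
    show "perm_of_list n xs ` {..<n} = {..<n}"
      using l assms(2) by (auto simp: image_def set_conv_nth perm_of_list_def)
  qed
  then show ?thesis unfolding perms_def mem_Collect_eq
    by (intro bij_imp_permutes) (auto simp: perm_of_list_def)
qed

lemma permute_list_upt: "length cs = k \<Longrightarrow> map (\<lambda>i. cs ! \<sigma> i) [0..<k] = permute_list \<sigma> cs"
  unfolding permute_list_def by simp

lemma set_permute_list_perms:
  "\<sigma> \<in> perms (length cs) \<Longrightarrow> set (permute_list \<sigma> cs) = set cs"
  by (metis mset_permute_list perms_def mem_Collect_eq set_mset_mset)

lemma sum_list_mset_eq:
  fixes xs :: "'a::comm_monoid_add list"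
  shows "mset xs = mset ys \<Longrightarrow> sum_list xs = sum_list ys"
  by (metis sum_mset_sum_list)

lemma concat_map_concat: "concat (map g (concat xss)) = concat (map (\<lambda>xs. concat (map g xs)) xss)"
  by (induction xss) auto

lemma list_all2_imp_map_eq:
  "list_all2 (\<lambda>a b. f a = f b) xs ys \<Longrightarrow> map f xs = map f ys"
  by (induction rule: list_all2_induct) auto

lemma fixsub_chaotic:
  fixes X :: "'o set" and L :: "'l set" and act :: "'l \<Rightarrow> 'o \<Rightarrow> 'o"
  defines "C \<equiv> fixsub (chaotic X) act (\<lambda>l. map_prod (act l) (act l)) L"
  shows "obj C = {x\<in>X. \<forall>l\<in>L. act l x = x}"
    and "hom C x y = (if x \<in> obj C \<and> y \<in> obj C then {(x,y)} else {})"
    and "idm C = (\<lambda>x. (x,x))"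
    and "cmp C = (\<lambda>g f. (fst f, snd g))"
  unfolding C_def fixsub_def chaotic_def by auto

text \<open>Between chaotic categories every functor is fully faithful and any two objects are
  isomorphic, so only the existence of objects matters.\<close>

lemma is_equivalence_fixsub_chaotic:
  assumes fixed: "\<And>x. x \<in> X \<Longrightarrow> \<forall>l\<in>L. act l x = x \<Longrightarrow> F x \<in> Y \<and> (\<forall>l\<in>L. act' l (F x) = F x)"
    and ess: "\<And>y. y \<in> Y \<Longrightarrow> \<forall>l\<in>L. act' l y = y \<Longrightarrow> \<exists>x\<in>X. \<forall>l\<in>L. act l x = x"
  shows "is_equivalence (fixsub (chaotic X) act (\<lambda>l. map_prod (act l) (act l)) L)
           (fixsub (chaotic Y) act' (\<lambda>l. map_prod (act' l) (act' l)) L) F (chaotic_functor F)"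
  (is "is_equivalence ?C ?D F _")
proof -
  have "is_functor ?C ?D F (chaotic_functor F)"
    unfolding is_functor_def fixsub_chaotic chaotic_functor_def using fixed by auto
  moreover have "\<exists>c\<in>obj ?C. \<exists>f. is_iso ?D (F c) d f" if d: "d \<in> obj ?D" for d
  proof -
    obtain c where "c \<in> obj ?C" using ess d by (force simp: fixsub_chaotic)
    then have "is_iso ?D (F c) d (F c, d)"
      using fixed d by (auto simp: is_iso_def fixsub_chaotic)
    with \<open>c \<in> obj ?C\<close> show ?thesis by blast
  qed
  ultimately show ?thesis
    unfolding is_equivalence_def by (auto simp: fixsub_chaotic chaotic_functor_def)
qed

lemma is_functor_chaotic:
  "(\<And>x. x \<in> X \<Longrightarrow> F x \<in> Y) \<Longrightarrow> is_functor (chaotic X) (chaotic Y) F (chaotic_functor F)"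
  unfolding is_functor_def chaotic_def chaotic_functor_def by auto


section \<open>The generators and their values in P_G\<close>

definition coset_GS :: "('g,'b) monoid_scheme \<Rightarrow> ('g \<times> (nat \<Rightarrow> nat)) set \<Rightarrow> 'g \<Rightarrow> (nat \<Rightarrow> nat)
                         \<Rightarrow> ('g \<times> (nat \<Rightarrow> nat)) set" where
  "coset_GS G \<Gamma> a \<sigma> = {(a \<otimes>\<^bsub>G\<^esub> h, \<sigma> \<circ> \<rho>) | h \<rho>. (h,\<rho>) \<in> \<Gamma>}"

lemma cosets_GS_conv: "cosets_GS G k \<Gamma> = {coset_GS G \<Gamma> a \<sigma> | a \<sigma>. a \<in> carrier G \<and> \<sigma> \<in> perms k}"
  unfolding cosets_GS_def coset_GS_def by simp

lemma coset_GS_memI: "(b,\<rho>) \<in> \<Gamma> \<Longrightarrow> (a \<otimes>\<^bsub>G\<^esub> b, \<sigma> \<circ> \<rho>) \<in> coset_GS G \<Gamma> a \<sigma>"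
  unfolding coset_GS_def by blast

lemma coset_GS_memE:
  assumes "z \<in> coset_GS G \<Gamma> a \<sigma>"
  obtains b \<rho> where "(b,\<rho>) \<in> \<Gamma>" "z = (a \<otimes>\<^bsub>G\<^esub> b, \<sigma> \<circ> \<rho>)"
  using assms unfolding coset_GS_def by blast

definition rcoset_rep :: "('g,'b) monoid_scheme \<Rightarrow> 'g set \<Rightarrow> 'g \<Rightarrow> 'g" where
  "rcoset_rep G H y = (SOME z. \<exists>h\<in>H. z = h \<otimes>\<^bsub>G\<^esub> y)"

text \<open>The \<Gamma>_T-equivariant map F_T : G \<rightarrow> \<Sigma>_|T| of the idea above; for the trivial exponents
  \<Gamma>_T = G \<times> 1 and the constant map works.  By this equivariance, gen_perm does not depend on the
  representative of the coset picked by SOME.\<close>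

fun expo_perm :: "('g,'b) monoid_scheme \<Rightarrow> 'g ordering \<Rightarrow> 'g expo \<Rightarrow> 'g \<Rightarrow> nat \<Rightarrow> nat" where
  "expo_perm G ord (EO H K) y = permrep G ord H K (y \<otimes>\<^bsub>G\<^esub> inv\<^bsub>G\<^esub> (rcoset_rep G H y))"
| "expo_perm G ord E0 y = id"
| "expo_perm G ord E2 y = id"

definition gen_perm :: "('g,'b) monoid_scheme \<Rightarrow> 'g ordering \<Rightarrow> 'g gen \<Rightarrow> 'g \<Rightarrow> nat \<Rightarrow> nat" where
  "gen_perm G ord s x =
     (case SOME p. p \<in> snd s of (a,\<sigma>) \<Rightarrow> \<sigma> \<circ> expo_perm G ord (fst s) (inv\<^bsub>G\<^esub> a \<otimes>\<^bsub>G\<^esub> x))"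

locale ordered_exponents = group G for G :: "('g,'b) monoid_scheme" (structure) +
  fixes ord :: "'g ordering"
  assumes orderings_ok: "orderings_ok G ord"
begin

context
  fixes H K
  assumes H: "subgroup H G" and K: "subgroup K G" and K_psubset: "K \<subset> H"
begin

abbreviation "m \<equiv> card (lcos G H K)"

lemma H_carrier: "H \<subseteq> carrier G"
  using H by (rule subgroup.subset)

lemma K_carrier: "K \<subseteq> carrier G"
  using K by (rule subgroup.subset)

lemma ord_bij: "bij_betw (ord H K) {..<m} (lcos G H K)"
  using orderings_ok H K K_psubset unfolding orderings_ok_def by simp

lemma ord_in_lcos: "i < m \<Longrightarrow> ord H K i \<in> lcos G H K"
  using bij_betw_apply[OF ord_bij] by simp

lemma ord_inj: "i < m \<Longrightarrow> j < m \<Longrightarrow> ord H K i = ord H K j \<Longrightarrow> i = j"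
  using bij_betw_imp_inj_on[OF ord_bij] unfolding inj_on_def by simp

lemma ord_surj: "C \<in> lcos G H K \<Longrightarrow> \<exists>j<m. ord H K j = C"
  using bij_betw_imp_surj_on[OF ord_bij] by (metis imageE lessThan_iff)

lemma lcos_subset_carrier: "C \<in> lcos G H K \<Longrightarrow> C \<subseteq> carrier G"
  unfolding lcos_def using l_coset_subset_G[OF K_carrier] H_carrier by blast

lemma lcos_l_coset_closed:
  assumes h: "h \<in> H" and C: "C \<in> lcos G H K"
  shows "h <# C \<in> lcos G H K"
proof -
  obtain h' where h': "h' \<in> H" "C = h' <# K" using C unfolding lcos_def by blast
  have "h <# C = (h \<otimes> h') <# K"
    using lcos_m_assoc[OF K_carrier] h h' H_carrier by (auto simp: subsetD)
  then show ?thesis unfolding lcos_def using subgroup.m_closed[OF H h h'(1)] by blast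
qed

lemma permrep_spec:
  assumes h: "h \<in> H" and i: "i < m"
  shows "permrep G ord H K h i < m \<and> ord H K (permrep G ord H K h i) = h <# ord H K i"
proof -
  obtain j where j: "j < m" "ord H K j = h <# ord H K i"
    using ord_surj lcos_l_coset_closed[OF h ord_in_lcos[OF i]] by blast
  then have "\<exists>!j. j < m \<and> ord H K j = h <# ord H K i"
    using ord_inj by metis
  then show ?thesis
    unfolding permrep_def using i theI'[of "\<lambda>j. j < m \<and> ord H K j = h <# ord H K i"] by simp
qed

lemma permrep_unique:
  "h \<in> H \<Longrightarrow> i < m \<Longrightarrow> j < m \<Longrightarrow> ord H K j = h <# ord H K i \<Longrightarrow> permrep G ord H K h i = j"
  using permrep_spec ord_inj by metis

lemma permrep_outside: "\<not> i < m \<Longrightarrow> permrep G ord H K h i = i"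
  unfolding permrep_def by simp

lemma permrep_mult:
  assumes h1: "h1 \<in> H" and h2: "h2 \<in> H"
  shows "permrep G ord H K (h1 \<otimes> h2) = permrep G ord H K h1 \<circ> permrep G ord H K h2"
proof
  fix i show "permrep G ord H K (h1 \<otimes> h2) i = (permrep G ord H K h1 \<circ> permrep G ord H K h2) i"
  proof (cases "i < m")
    case True
    note p2 = permrep_spec[OF h2 True]
    note p1 = permrep_spec[OF h1 p2[THEN conjunct1]]
    have "ord H K (permrep G ord H K h1 (permrep G ord H K h2 i)) = h1 <# (h2 <# ord H K i)"
      using p1 p2 by simp
    also have "\<dots> = (h1 \<otimes> h2) <# ord H K i"
      using lcos_m_assoc[OF lcos_subset_carrier[OF ord_in_lcos[OF True]]] h1 h2 H_carrier
      by (simp add: subsetD)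
    finally show ?thesis
      using permrep_unique[OF subgroup.m_closed[OF H h1 h2] True p1[THEN conjunct1]] by simp
  qed (simp add: permrep_outside)
qed

lemma permrep_one: "permrep G ord H K \<one> = id"
proof
  fix i show "permrep G ord H K \<one> i = id i"
    using permrep_unique[OF subgroup.one_closed[OF H], of i i]
      lcos_mult_one[OF lcos_subset_carrier[OF ord_in_lcos]] permrep_outside
    by (cases "i < m") auto
qed

lemma permrep_inv_cancel: "h \<in> H \<Longrightarrow> permrep G ord H K h \<circ> permrep G ord H K (inv h) = id"
  using permrep_mult[OF _ subgroup.m_inv_closed[OF H]] permrep_one H_carrier
  by (metis r_inv subsetD)

lemma permrep_perms:
  assumes h: "h \<in> H"
  shows "permrep G ord H K h \<in> perms m"
proof -
  have hi: "inv h \<in> H" using subgroup.m_inv_closed[OF H h] .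
  have "inv (inv h) = h" using h H_carrier by auto
  then have "bij_betw (permrep G ord H K h) {..<m} {..<m}"
    using permrep_inv_cancel[OF h] permrep_inv_cancel[OF hi] permrep_spec[OF h] permrep_spec[OF hi]
    by (intro bij_betw_byWitness[where f'="permrep G ord H K (inv h)"]) (auto simp: fun_eq_iff)
  then show ?thesis unfolding perms_def
    using bij_imp_permutes permrep_outside by (metis lessThan_iff mem_Collect_eq)
qed

end

lemma rcoset_rep_in_rcoset:
  assumes H: "subgroup H G" and y: "y \<in> carrier G"
  shows "\<exists>h\<in>H. rcoset_rep G H y = h \<otimes> y"
proof -
  have "\<exists>z. \<exists>h\<in>H. z = h \<otimes> y" using subgroup.one_closed[OF H] by blast
  then show ?thesis unfolding rcoset_rep_def by (rule someI_ex)
qed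

lemma rcoset_rep_carrier: "subgroup H G \<Longrightarrow> y \<in> carrier G \<Longrightarrow> rcoset_rep G H y \<in> carrier G"
  using rcoset_rep_in_rcoset subgroup.mem_carrier by fastforce

lemma rcoset_rep_mult:
  assumes H: "subgroup H G" and y: "y \<in> carrier G" and h0: "h0 \<in> H"
  shows "rcoset_rep G H (h0 \<otimes> y) = rcoset_rep G H y"
proof -
  have h0c: "h0 \<in> carrier G" using H h0 by (rule subgroup.mem_carrier)
  have "(\<exists>h\<in>H. z = h \<otimes> (h0 \<otimes> y)) \<longleftrightarrow> (\<exists>h\<in>H. z = h \<otimes> y)" for z
  proof
    assume "\<exists>h\<in>H. z = h \<otimes> (h0 \<otimes> y)"
    then obtain h where "h \<in> H" "z = (h \<otimes> h0) \<otimes> y"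
      using h0c y subgroup.mem_carrier[OF H] by (auto simp: m_assoc)
    then show "\<exists>h\<in>H. z = h \<otimes> y" using subgroup.m_closed[OF H _ h0] by blast
  next
    assume "\<exists>h\<in>H. z = h \<otimes> y"
    then obtain h where h: "h \<in> H" "z = h \<otimes> y" by blast
    have "inv h0 \<otimes> (h0 \<otimes> y) = y" using h0c y by (simp add: m_assoc[symmetric])
    then have "z = (h \<otimes> inv h0) \<otimes> (h0 \<otimes> y)"
      using h h0c y subgroup.mem_carrier[OF H] by (simp add: m_assoc)
    then show "\<exists>h\<in>H. z = h \<otimes> (h0 \<otimes> y)"
      using subgroup.m_closed[OF H h(1) subgroup.m_inv_closed[OF H h0]] by blast
  qed
  then show ?thesis unfolding rcoset_rep_def by simp
qed

lemma rcoset_rep_defect: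
  assumes H: "subgroup H G" and y: "y \<in> carrier G"
  shows "y \<otimes> inv (rcoset_rep G H y) \<in> H"
proof -
  obtain h where h: "h \<in> H" "rcoset_rep G H y = h \<otimes> y" using rcoset_rep_in_rcoset[OF H y] by blast
  have "y \<otimes> inv (rcoset_rep G H y) = inv h"
    using h y subgroup.mem_carrier[OF H] by (simp add: inv_mult_group m_assoc[symmetric])
  then show ?thesis using subgroup.m_inv_closed[OF H h(1)] by simp
qed

lemma EO_expos_iff: "EO H K \<in> expos G \<longleftrightarrow> subgroup H G \<and> subgroup K G \<and> K \<subset> H"
  unfolding expos_def by auto

lemma Gamma_subset:
  assumes e: "e \<in> expos G"
  shows "Gamma G ord e \<subseteq> carrier G \<times> perms (arity G e)"
proof (cases e)
  case (EO H K)
  then show ?thesis using e permrep_perms subgroup.mem_carrier by (auto simp: EO_expos_iff)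
qed auto

lemma Gamma_one: "e \<in> expos G \<Longrightarrow> \<exists>\<rho>. (\<one>, \<rho>) \<in> Gamma G ord e"
  by (cases e) (auto simp: EO_expos_iff intro: subgroup.one_closed)

lemma expo_perm_perms:
  "e \<in> expos G \<Longrightarrow> y \<in> carrier G \<Longrightarrow> expo_perm G ord e y \<in> perms (arity G e)"
  by (cases e) (auto simp: EO_expos_iff intro: permrep_perms rcoset_rep_defect)

lemma expo_perm_equivariant:
  assumes e: "e \<in> expos G" and hr: "(h,\<rho>) \<in> Gamma G ord e" and y: "y \<in> carrier G"
  shows "expo_perm G ord e (h \<otimes> y) = \<rho> \<circ> expo_perm G ord e y"
proof (cases e)
  case (EO H K)
  have HK: "subgroup H G" "subgroup K G" "K \<subset> H" using e EO by (auto simp: EO_expos_iff)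
  have h: "h \<in> H" and \<rho>: "\<rho> = permrep G ord H K h" using hr EO by auto
  have "h \<otimes> y \<otimes> inv (rcoset_rep G H (h \<otimes> y)) = h \<otimes> (y \<otimes> inv (rcoset_rep G H y))"
    using rcoset_rep_mult[OF HK(1) y h] rcoset_rep_carrier[OF HK(1) y] y
      subgroup.mem_carrier[OF HK(1) h] by (simp add: m_assoc)
  then show ?thesis
    using permrep_mult[OF HK h rcoset_rep_defect[OF HK(1) y]] EO \<rho> by simp
qed (use hr in auto)

lemma expo_perm_equivariant':
  assumes e: "e \<in> expos G" and hr: "(h,\<rho>) \<in> Gamma G ord e" and z: "z \<in> carrier G"
  shows "\<rho> \<circ> expo_perm G ord e (inv h \<otimes> z) = expo_perm G ord e z"
proof -
  have h: "h \<in> carrier G" using Gamma_subset[OF e] hr by auto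
  then have "h \<otimes> (inv h \<otimes> z) = z" using z by (simp add: m_assoc[symmetric])
  then show ?thesis using expo_perm_equivariant[OF e hr] h z by (metis inv_closed m_closed)
qed

lemma gen_perm_coset:
  assumes e: "e \<in> expos G" and a: "a \<in> carrier G" and x: "x \<in> carrier G"
  shows "gen_perm G ord (e, coset_GS G (Gamma G ord e) a \<sigma>) x = \<sigma> \<circ> expo_perm G ord e (inv a \<otimes> x)"
proof -
  let ?c = "coset_GS G (Gamma G ord e) a \<sigma>"
  obtain \<rho>0 where "(\<one>, \<rho>0) \<in> Gamma G ord e" using Gamma_one[OF e] by blast
  then have "(SOME p. p \<in> ?c) \<in> ?c" by (intro someI) (rule coset_GS_memI)
  then obtain h \<rho> where hr: "(h,\<rho>) \<in> Gamma G ord e" and sp: "(SOME p. p \<in> ?c) = (a \<otimes> h, \<sigma> \<circ> \<rho>)"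
    by (rule coset_GS_memE)
  have h: "h \<in> carrier G" using Gamma_subset[OF e] hr by auto
  have "inv (a \<otimes> h) \<otimes> x = inv h \<otimes> (inv a \<otimes> x)"
    using a h x by (simp add: inv_mult_group m_assoc)
  moreover have "\<rho> \<circ> expo_perm G ord e (inv h \<otimes> (inv a \<otimes> x)) = expo_perm G ord e (inv a \<otimes> x)"
    using expo_perm_equivariant'[OF e hr] a x by simp
  ultimately show ?thesis by (simp add: gen_perm_def sp comp_assoc)
qed

lemma gen_act_coset:
  assumes e: "e \<in> expos G" and a: "a \<in> carrier G" and b: "b \<in> carrier G"
  shows "gen_act G (b,\<tau>) (e, coset_GS G (Gamma G ord e) a \<sigma>)
           = (e, coset_GS G (Gamma G ord e) (b \<otimes> a) (\<tau> \<circ> \<sigma>))"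
proof -
  have "b \<otimes> (a \<otimes> h) = b \<otimes> a \<otimes> h" if "(h,\<rho>) \<in> Gamma G ord e" for h \<rho>
    using that Gamma_subset[OF e] a b by (auto simp: m_assoc)
  then show ?thesis
    unfolding gen_act_def coset_act_def coset_GS_def by (auto simp: o_assoc) (metis o_assoc)+
qed

lemma gens_cases:
  assumes "s \<in> gens G ord k"
  obtains e a \<sigma> where "s = (e, coset_GS G (Gamma G ord e) a \<sigma>)" "e \<in> expos G"
    "arity G e = k" "a \<in> carrier G" "\<sigma> \<in> perms k"
  using assms unfolding gens_def cosets_GS_conv by blast

lemma gen_perm_perms:
  assumes "s \<in> gens G ord k" and x: "x \<in> carrier G"
  shows "gen_perm G ord s x \<in> perms k"
  using assms(1)
proof (cases rule: gens_cases)
  case (1 e a \<sigma>)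
  then show ?thesis
    using gen_perm_coset[OF 1(2,4) x] perms_comp expo_perm_perms[OF 1(2), of "inv a \<otimes> x"] x
    by simp
qed

lemma gen_perm_act_perm:
  assumes "s \<in> gens G ord k" and x: "x \<in> carrier G"
  shows "gen_perm G ord (gen_act G (\<one>,\<tau>) s) x = \<tau> \<circ> gen_perm G ord s x"
  using assms(1)
proof (cases rule: gens_cases)
  case (1 e a \<sigma>)
  then show ?thesis
    using gen_act_coset[OF 1(2,4) one_closed] gen_perm_coset[OF 1(2) _ x] by (simp add: o_assoc)
qed

lemma gen_perm_act_group:
  assumes "s \<in> gens G ord k" and x: "x \<in> carrier G" and b: "b \<in> carrier G"
  shows "gen_perm G ord (gen_act G (b,id) s) x = gen_perm G ord s (inv b \<otimes> x)"
  using assms(1)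
proof (cases rule: gens_cases)
  case (1 e a \<sigma>)
  have "inv (b \<otimes> a) \<otimes> x = inv a \<otimes> (inv b \<otimes> x)"
    using 1(4) b x by (simp add: inv_mult_group m_assoc)
  then show ?thesis
    using gen_act_coset[OF 1(2,4) b] gen_perm_coset[OF 1(2) _ x] gen_perm_coset[OF 1(2,4)] 1 b x
    by simp
qed

lemma gens_act_closed:
  assumes "s \<in> gens G ord k" and b: "b \<in> carrier G" and \<tau>: "\<tau> \<in> perms k"
  shows "gen_act G (b,\<tau>) s \<in> gens G ord k"
  using assms(1)
proof (cases rule: gens_cases)
  case (1 e a \<sigma>)
  then show ?thesis
    unfolding 1(1) gen_act_coset[OF 1(2,4) b] gens_def cosets_GS_conv
    using b perms_comp[OF \<tau> 1(5)] by auto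
qed

lemma gen_act_commute:
  assumes "s \<in> gens G ord k" and b: "b \<in> carrier G"
  shows "gen_act G (b,id) (gen_act G (\<one>,\<tau>) s) = gen_act G (\<one>,\<tau>) (gen_act G (b,id) s)"
  using assms(1)
proof (cases rule: gens_cases)
  case (1 e a \<sigma>)
  then show ?thesis using gen_act_coset[OF 1(2)] b by simp
qed

end


section \<open>Reading off the leaves of a tree\<close>

fun leaf_word :: "('g,'b) monoid_scheme \<Rightarrow> 'g ordering \<Rightarrow> 'g gen tree \<Rightarrow> 'g \<Rightarrow> nat list" where
  "leaf_word G ord (Leaf i) x = [i]"
| "leaf_word G ord (Node s cs) x =
     concat (permute_list (gen_perm G ord s x) (map (\<lambda>c. leaf_word G ord c x) cs))"

lemma teq_relabel: "teq S act t u \<Longrightarrow> teq S act (relabel f t) (relabel f u)"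
proof (induction rule: teq.induct)
  case (teq_cong cs ds s)
  then have "list_all2 (teq S act) (map (relabel f) cs) (map (relabel f) ds)"
    by (auto simp: list.rel_map elim: list_all2_mono)
  then show ?case by (simp add: teq.teq_cong)
next
  case (teq_equiv s k \<sigma> cs)
  have "teq S act (Node (act \<sigma> s) (map (relabel f) cs))
          (Node s (map (\<lambda>i. map (relabel f) cs ! \<sigma> i) [0..<k]))"
    by (rule teq.teq_equiv) (use teq_equiv in simp_all)
  moreover have "map (\<lambda>i. map (relabel f) cs ! \<sigma> i) [0..<k] = map (relabel f) (map (\<lambda>i. cs ! \<sigma> i) [0..<k])"
    using perms_lessThan[OF teq_equiv(2)] teq_equiv(3) by simp
  ultimately show ?case by (simp only: relabel.simps)
qed (auto intro: teq.intros)

context ordered_exponents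
begin

lemma teqG_refl: "teqG G ord t t"
  unfolding teqG_def by (rule teq.teq_refl)

lemma teqG_sym: "teqG G ord t u \<Longrightarrow> teqG G ord u t"
  unfolding teqG_def by (rule teq.teq_sym)

lemma teqG_trans: "teqG G ord t u \<Longrightarrow> teqG G ord u v \<Longrightarrow> teqG G ord t v"
  unfolding teqG_def by (rule teq.teq_trans)

lemma teqG_relabel: "teqG G ord t u \<Longrightarrow> teqG G ord (relabel f t) (relabel f u)"
  unfolding teqG_def by (rule teq_relabel)

lemma teqG_maplab:
  assumes "teqG G ord t u" and b: "b \<in> carrier G"
  shows "teqG G ord (maplab (gen_act G (b,id)) t) (maplab (gen_act G (b,id)) u)"
  using assms(1) unfolding teqG_def
proof (induction rule: teq.induct)
  case (teq_cong cs ds s)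
  let ?M = "maplab (gen_act G (b,id))"
  let ?T = "teq (gens G ord) (\<lambda>\<sigma>. gen_act G (\<one>, \<sigma>))"
  have "list_all2 (\<lambda>x y. ?T (?M x) (?M y)) cs ds"
    using teq_cong by (rule list_all2_mono) (simp add: id_def)
  then have "list_all2 ?T (map ?M cs) (map ?M ds)" by (simp add: list.rel_map)
  then show ?case unfolding id_def by (simp add: teq.teq_cong)
next
  case (teq_equiv s k \<sigma> cs)
  let ?M = "maplab (gen_act G (b,id))"
  have "teq (gens G ord) (\<lambda>\<sigma>. gen_act G (\<one>, \<sigma>))
          (Node (gen_act G (\<one>,\<sigma>) (gen_act G (b,id) s)) (map ?M cs))
          (Node (gen_act G (b,id) s) (map (\<lambda>i. map ?M cs ! \<sigma> i) [0..<k]))"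
    by (rule teq.teq_equiv) (use gens_act_closed[OF teq_equiv(1) b perms_id] teq_equiv in simp_all)
  moreover have "map (\<lambda>i. map ?M cs ! \<sigma> i) [0..<k] = map ?M (map (\<lambda>i. cs ! \<sigma> i) [0..<k])"
    using perms_lessThan[OF teq_equiv(2)] teq_equiv(3) by simp
  ultimately show ?case
    unfolding maplab.simps id_def[symmetric] gen_act_commute[OF teq_equiv(1) b] by simp
qed (auto intro: teq.intros)

lemma teqG_nodes_ok: "teqG G ord t u \<Longrightarrow> nodes_ok (gens G ord) t = nodes_ok (gens G ord) u"
  unfolding teqG_def
proof (induction rule: teq.induct)
  case (teq_cong cs ds s)
  have l: "length cs = length ds" using teq_cong list_all2_lengthD by blast
  have "(\<forall>c\<in>set cs. nodes_ok (gens G ord) c) = (\<forall>d\<in>set ds. nodes_ok (gens G ord) d)"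
    using teq_cong l by (simp add: list_all2_conv_all_nth all_set_conv_all_nth)
  then show ?case using l by simp
next
  case (teq_equiv s k \<sigma> cs)
  have "set (map (\<lambda>i. cs ! \<sigma> i) [0..<k]) = set cs"
    using teq_equiv(2,3) set_permute_list_perms[of \<sigma> cs] permute_list_upt[of cs k \<sigma>] by simp
  then show ?case using gens_act_closed[OF teq_equiv(1) one_closed teq_equiv(2)] teq_equiv by simp
qed auto

lemma nodes_ok_maplab:
  "nodes_ok (gens G ord) t \<Longrightarrow> b \<in> carrier G \<Longrightarrow> nodes_ok (gens G ord) (maplab (gen_act G (b,id)) t)"
  by (induction t) (auto intro: gens_act_closed)

lemma gen_perm_permutes:
  "s \<in> gens G ord (length cs) \<Longrightarrow> x \<in> carrier G \<Longrightarrow> gen_perm G ord s x permutes {..<length cs}"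
  using gen_perm_perms unfolding perms_def by blast

lemma leaf_word_teqG:
  assumes "teqG G ord t u" and x: "x \<in> carrier G"
  shows "leaf_word G ord t x = leaf_word G ord u x"
  using assms(1) unfolding teqG_def
proof (induction rule: teq.induct)
  case (teq_cong cs ds s)
  have "list_all2 (\<lambda>c d. leaf_word G ord c x = leaf_word G ord d x) cs ds"
    using teq_cong by (rule list_all2_mono) simp
  then have "map (\<lambda>c. leaf_word G ord c x) cs = map (\<lambda>c. leaf_word G ord c x) ds"
    by (rule list_all2_imp_map_eq)
  then show ?case by simp
next
  case (teq_equiv s k \<sigma> cs)
  let ?L = "map (\<lambda>c. leaf_word G ord c x) cs"
  have "permute_list (gen_perm G ord (gen_act G (\<one>, \<sigma>) s) x) ?L
          = permute_list (gen_perm G ord s x) (permute_list \<sigma> ?L)"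
    using gen_perm_act_perm[OF teq_equiv(1) x] gen_perm_permutes[of s cs x] teq_equiv x
    by (simp add: permute_list_compose)
  moreover have "permute_list \<sigma> ?L = map (\<lambda>c. leaf_word G ord c x) (map (\<lambda>i. cs ! \<sigma> i) [0..<k])"
    using teq_equiv(2,3) permute_list_map[of \<sigma> cs] permute_list_upt[of cs k \<sigma>]
    by (simp add: perms_def)
  ultimately show ?case by simp
qed auto

lemma leaf_word_relabel:
  "nodes_ok (gens G ord) t \<Longrightarrow> x \<in> carrier G
     \<Longrightarrow> leaf_word G ord (relabel f t) x = map f (leaf_word G ord t x)"
proof (induction t)
  case (Node s cs)
  let ?L = "map (\<lambda>c. leaf_word G ord c x) cs"
  have IH: "map (\<lambda>c. leaf_word G ord c x) (map (relabel f) cs) = map (map f) ?L"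
    using Node by simp
  have "gen_perm G ord s x permutes {..<length ?L}"
    using Node.prems by (auto intro: gen_perm_permutes)
  then show ?case
    by (simp only: relabel.simps leaf_word.simps IH permute_list_map map_concat)
qed simp

lemma leaf_word_maplab:
  "nodes_ok (gens G ord) t \<Longrightarrow> x \<in> carrier G \<Longrightarrow> a \<in> carrier G
     \<Longrightarrow> leaf_word G ord (maplab (gen_act G (a,id)) t) x = leaf_word G ord t (inv a \<otimes> x)"
proof (induction t arbitrary: x)
  case (Node s cs)
  have IH: "map (\<lambda>c. leaf_word G ord c x) (map (maplab (gen_act G (a,id))) cs)
              = map (\<lambda>c. leaf_word G ord c (inv a \<otimes> x)) cs"
    using Node by (simp add: id_def)
  have "gen_perm G ord (gen_act G (a,id) s) x = gen_perm G ord s (inv a \<otimes> x)"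
    using gen_perm_act_group[of s "length cs" x a] Node.prems by simp
  then show ?case
    by (simp only: maplab.simps leaf_word.simps IH)
qed simp

lemma mset_leaf_word:
  "nodes_ok (gens G ord) t \<Longrightarrow> x \<in> carrier G \<Longrightarrow> mset (leaf_word G ord t x) = mset (leaves t)"
proof (induction t)
  case (Node s cs)
  let ?L = "map (\<lambda>c. leaf_word G ord c x) cs"
  have w: "gen_perm G ord s x permutes {..<length ?L}"
    using Node.prems by (auto intro: gen_perm_permutes)
  have "mset (leaf_word G ord (Node s cs) x) = sum_list (permute_list (gen_perm G ord s x) (map mset ?L))"
    by (simp only: leaf_word.simps mset_concat permute_list_map[OF w])
  also have "\<dots> = sum_list (map mset ?L)"
    using w by (intro sum_list_mset_eq) simp
  also have "\<dots> = sum_list (map mset (map leaves cs))"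
    using Node by (simp cong: map_cong)
  finally show ?case by (simp add: mset_concat)
qed simp

lemma leaf_word_subst:
  "nodes_ok (gens G ord) t \<Longrightarrow> x \<in> carrier G \<Longrightarrow> \<forall>j\<in>set (leaves t). nodes_ok (gens G ord) (ts ! j)
     \<Longrightarrow> leaf_word G ord (subst t ns ts) x =
           concat (map (\<lambda>j. map (\<lambda>i. sum_list (take j ns) + i) (leaf_word G ord (ts ! j) x))
                       (leaf_word G ord t x))"
proof (induction t)
  case (Leaf j)
  then show ?case using leaf_word_relabel by simp
next
  case (Node s cs)
  let ?g = "\<lambda>j. map (\<lambda>i. sum_list (take j ns) + i) (leaf_word G ord (ts ! j) x)"
  let ?L = "map (\<lambda>c. leaf_word G ord c x) cs"
  have IH: "map (\<lambda>c. leaf_word G ord c x) (map (\<lambda>c. subst c ns ts) cs)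
              = map (\<lambda>xs. concat (map ?g xs)) ?L"
    using Node by simp
  have "gen_perm G ord s x permutes {..<length ?L}"
    using Node.prems by (auto intro: gen_perm_permutes)
  then show ?case
    by (simp only: subst.simps leaf_word.simps IH permute_list_map concat_map_concat)
qed

end


section \<open>The map of operads\<close>

lemma perm_of_list_map:
  assumes "length w = n" and "\<tau> \<in> perms n"
  shows "perm_of_list n (map \<tau> w) = \<tau> \<circ> perm_of_list n w"
  using assms perms_outside[OF assms(2)] by (auto simp: perm_of_list_def fun_eq_iff)

lemma assoc_comp_perm_of_list:
  assumes w: "distinct w" "set w = {..<length ns}"
    and vs: "\<And>j. j < length ns \<Longrightarrow> length (vs j) = ns ! j"
  shows "assoc_comp (perm_of_list (length ns) w) ns (map (\<lambda>j. perm_of_list (ns ! j) (vs j)) [0..<length ns])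
     = perm_of_list (sum_list ns) (concat (map (\<lambda>j. map (\<lambda>i. sum_list (take j ns) + i) (vs j)) w))"
proof -
  let ?k = "length ns" and ?W = "perm_of_list (length ns) w"
    and ?V = "map (\<lambda>j. perm_of_list (ns ! j) (vs j)) [0..<length ns]"
  define F where "F j = map (\<lambda>i. sum_list (take j ns) + i) (vs j)" for j
  have len_w: "length w = ?k" using distinct_card[OF w(1)] w(2) by simp
  have block: "map (\<lambda>q. sum_list (take j ns) + (?V ! j) q) [0..<ns ! j] = F j" if "j < ?k" for j
    by (rule nth_equalityI) (use that vs[OF that] in \<open>simp_all add: F_def perm_of_list_def\<close>)
  have blocks: "map (\<lambda>p. map (\<lambda>q. sum_list (take (?W p) ns) + (?V ! ?W p) q) [0..<ns ! ?W p]) [0..<?k]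
                  = map F w"
  proof (rule nth_equalityI)
    fix p assume "p < length (map (\<lambda>p. map (\<lambda>q. sum_list (take (?W p) ns) + (?V ! ?W p) q)
                                       [0..<ns ! ?W p]) [0..<?k])"
    then have p: "p < ?k" by simp
    have "w ! p < ?k" using w(2) len_w p by (metis lessThan_iff nth_mem)
    then show "map (\<lambda>p. map (\<lambda>q. sum_list (take (?W p) ns) + (?V ! ?W p) q) [0..<ns ! ?W p]) [0..<?k] ! p
                 = map F w ! p"
      using p block len_w by (simp add: perm_of_list_def)
  qed (simp add: len_w)
  have "length (concat (map F w)) = sum_list ns"
  proof -
    have "length (concat (map F w)) = sum_list (map ((!) ns) w)"
      unfolding F_def length_concat using vs w(2)
      by (auto simp: o_def intro!: arg_cong[where f=sum_list] map_cong)
    also have "\<dots> = sum_list (map ((!) ns) [0..<?k])"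
      using w mset_set_set[OF w(1)] by (intro sum_list_mset_eq) (simp add: atLeast0LessThan)
    also have "\<dots> = sum_list ns" by (simp add: map_nth)
    finally show ?thesis .
  qed
  then show ?thesis
    unfolding assoc_comp_def Let_def length_map length_upt diff_zero blocks F_def[symmetric]
    by (simp add: perm_of_list_def)
qed

definition leaf_perm :: "('g,'b) monoid_scheme \<Rightarrow> 'g ordering \<Rightarrow> nat \<Rightarrow> 'g gen tree set \<Rightarrow> 'g \<Rightarrow> nat \<Rightarrow> nat" where
  "leaf_perm G ord n X = restrict (\<lambda>x. perm_of_list n (leaf_word G ord (SOME t. t \<in> X) x)) (carrier G)"

context ordered_exponents
begin

lemma cls_self: "t \<in> cls G ord t"
  unfolding cls_def using teqG_refl by simp

lemma FO_cases:
  assumes "X \<in> FO G ord n"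
  obtains t where "wft (gens G ord) n t" "X = cls G ord t"
  using assms unfolding FO_def by blast

lemma leaf_word_cls: "u \<in> cls G ord t \<Longrightarrow> x \<in> carrier G \<Longrightarrow> leaf_word G ord u x = leaf_word G ord t x"
  unfolding cls_def using leaf_word_teqG by simp

lemma leaf_word_wft:
  assumes "wft (gens G ord) n t" and "x \<in> carrier G"
  shows "distinct (leaf_word G ord t x)" "set (leaf_word G ord t x) = {..<n}"
    and "length (leaf_word G ord t x) = n"
proof -
  have "mset (leaf_word G ord t x) = mset (leaves t)"
    using mset_leaf_word assms unfolding wft_def by blast
  then show "distinct (leaf_word G ord t x)" "set (leaf_word G ord t x) = {..<n}"
    using assms(1) mset_eq_imp_distinct_iff unfolding wft_def by (metis set_mset_mset)+
  then show "length (leaf_word G ord t x) = n" using distinct_card by fastforce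
qed

lemma leaf_perm_eqI:
  assumes "u0 \<in> X" and "\<And>u. u \<in> X \<Longrightarrow> leaf_word G ord u x = w" and "x \<in> carrier G"
  shows "leaf_perm G ord n X x = perm_of_list n w"
  using someI[of "\<lambda>t. t \<in> X", OF assms(1)] assms(2,3) unfolding leaf_perm_def by simp

lemma leaf_perm_cls:
  "x \<in> carrier G \<Longrightarrow> leaf_perm G ord n (cls G ord t) x = perm_of_list n (leaf_word G ord t x)"
  using leaf_perm_eqI[OF cls_self] leaf_word_cls by blast

lemma leaf_perm_extensional: "leaf_perm G ord n X \<in> extensional (carrier G)"
  unfolding leaf_perm_def by simp

lemma leaf_perm_PG:
  assumes "X \<in> FO G ord n"
  shows "leaf_perm G ord n X \<in> PG G n"
proof -
  obtain t where "wft (gens G ord) n t" "X = cls G ord t" using assms by (rule FO_cases)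
  then have "leaf_perm G ord n X x \<in> perms n" if "x \<in> carrier G" for x
    using that by (simp add: leaf_perm_cls perm_of_list_perms leaf_word_wft)
  then show ?thesis unfolding PG_def by (simp add: PiE_iff leaf_perm_extensional)
qed

lemma leaf_word_FO_act:
  assumes t: "wft (gens G ord) n t" and u: "u \<in> FO_act G ord (a,\<tau>) (cls G ord t)"
    and a: "a \<in> carrier G" and x: "x \<in> carrier G"
  shows "leaf_word G ord u x = map \<tau> (leaf_word G ord t (inv a \<otimes> x))"
proof -
  have ok: "nodes_ok (gens G ord) t" using t unfolding wft_def by simp
  obtain t' where "teqG G ord t' t" "teqG G ord u (relabel \<tau> (maplab (gen_act G (a,id)) t'))"
    using u unfolding FO_act_def cls_def by auto
  then have "teqG G ord u (relabel \<tau> (maplab (gen_act G (a,id)) t))"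
    using teqG_trans teqG_relabel teqG_maplab a by blast
  then have "leaf_word G ord u x = leaf_word G ord (relabel \<tau> (maplab (gen_act G (a,id)) t)) x"
    using leaf_word_teqG x by blast
  also have "\<dots> = map \<tau> (leaf_word G ord t (inv a \<otimes> x))"
    using leaf_word_relabel[OF nodes_ok_maplab[OF ok a] x] leaf_word_maplab[OF ok x a] by simp
  finally show ?thesis .
qed

lemma leaf_perm_equivariant:
  assumes X: "X \<in> FO G ord n" and a: "a \<in> carrier G" and \<tau>: "\<tau> \<in> perms n"
  shows "leaf_perm G ord n (FO_act G ord (a,\<tau>) X) = PG_act G (a,\<tau>) (leaf_perm G ord n X)"
proof
  fix x
  obtain t where t: "wft (gens G ord) n t" "X = cls G ord t" using X by (rule FO_cases)
  have "relabel \<tau> (maplab (gen_act G (a,id)) t) \<in> FO_act G ord (a,\<tau>) X"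
    unfolding FO_act_def t(2) using cls_self teqG_refl by auto
  then have "x \<in> carrier G \<Longrightarrow> leaf_perm G ord n (FO_act G ord (a,\<tau>) X) x
               = perm_of_list n (map \<tau> (leaf_word G ord t (inv a \<otimes> x)))"
    using leaf_perm_eqI leaf_word_FO_act[OF t(1) _ a] t(2) by blast
  then show "leaf_perm G ord n (FO_act G ord (a,\<tau>) X) x = PG_act G (a,\<tau>) (leaf_perm G ord n X) x"
    using t a \<tau> by (auto simp: PG_act_def leaf_perm_cls perm_of_list_map leaf_word_wft)
      (simp add: leaf_perm_def)
qed

lemma leaf_perm_unit: "leaf_perm G ord 1 (FO_unit G ord) = PG_unit G"
  by (auto simp: FO_unit_def PG_unit_def leaf_perm_cls perm_of_list_def fun_eq_iff)
    (simp add: leaf_perm_def)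

lemma leaf_word_FO_comp:
  assumes t: "wft (gens G ord) (length ns) t"
    and ts: "length ts = length ns" "\<And>j. j < length ns \<Longrightarrow> wft (gens G ord) (ns ! j) (ts ! j)"
    and u: "u \<in> FO_comp G ord (cls G ord t) ns (map (cls G ord) ts)" and x: "x \<in> carrier G"
  shows "leaf_word G ord u x = concat (map (\<lambda>j. map (\<lambda>i. sum_list (take j ns) + i)
                                                  (leaf_word G ord (ts ! j) x)) (leaf_word G ord t x))"
proof -
  obtain t' ts' where t': "teqG G ord t' t" and ts': "list_all2 (\<in>) ts' (map (cls G ord) ts)"
    and u': "teqG G ord u (subst t' ns ts')"
    using u unfolding FO_comp_def cls_def by blast
  have ok': "nodes_ok (gens G ord) t'" using t teqG_nodes_ok[OF t'] unfolding wft_def by simp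
  have "set (leaves t') = set (leaf_word G ord t' x)"
    using mset_leaf_word[OF ok' x] by (metis set_mset_mset)
  then have leaves_t': "set (leaves t') = {..<length ns}"
    using leaf_word_teqG[OF t' x] leaf_word_wft(2)[OF t x] by simp
  have ts'_j: "teqG G ord (ts' ! j) (ts ! j)" if "j < length ns" for j
    using ts' that ts(1) by (auto simp: list_all2_conv_all_nth cls_def)
  have "leaf_word G ord u x = leaf_word G ord (subst t' ns ts') x"
    using leaf_word_teqG[OF u' x] .
  also have "\<dots> = concat (map (\<lambda>j. map (\<lambda>i. sum_list (take j ns) + i) (leaf_word G ord (ts' ! j) x))
                               (leaf_word G ord t' x))"
    using ok' ts'_j teqG_nodes_ok ts(2) leaves_t' x
    by (intro leaf_word_subst) (auto simp: wft_def)
  also have "\<dots> = concat (map (\<lambda>j. map (\<lambda>i. sum_list (take j ns) + i) (leaf_word G ord (ts ! j) x))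
                               (leaf_word G ord t x))"
    using leaf_word_teqG[OF t' x] leaf_word_teqG[OF ts'_j x] leaf_word_wft[OF t x]
    by (auto intro!: arg_cong[where f=concat] map_cong)
  finally show ?thesis .
qed

lemma FO_list_cases:
  assumes len: "length Ys = length ns" and Y: "\<forall>i<length ns. Ys ! i \<in> FO G ord (ns ! i)"
  obtains ts where "length ts = length ns" "\<And>j. j < length ns \<Longrightarrow> wft (gens G ord) (ns ! j) (ts ! j)"
    "Ys = map (cls G ord) ts"
proof -
  have "\<forall>i<length ns. \<exists>t. wft (gens G ord) (ns ! i) t \<and> Ys ! i = cls G ord t"
    using Y by (metis FO_cases)
  then obtain tt where tt: "\<And>i. i < length ns \<Longrightarrow> wft (gens G ord) (ns ! i) (tt i) \<and> Ys ! i = cls G ord (tt i)"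
    by metis
  show ?thesis
    by (rule that[of "map tt [0..<length ns]"]) (use tt len in \<open>auto intro: nth_equalityI\<close>)
qed

lemma subst_in_FO_comp: "subst t ns ts \<in> FO_comp G ord (cls G ord t) ns (map (cls G ord) ts)"
proof -
  have "list_all2 (\<in>) ts (map (cls G ord) ts)"
    by (simp add: list_all2_conv_all_nth cls_self)
  then show ?thesis unfolding FO_comp_def using cls_self teqG_refl by blast
qed

lemma leaf_perm_comp:
  assumes X: "X \<in> FO G ord (length ns)" and len: "length Ys = length ns"
    and Y: "\<forall>i<length ns. Ys ! i \<in> FO G ord (ns ! i)"
  shows "leaf_perm G ord (sum_list ns) (FO_comp G ord X ns Ys) =
     PG_comp G (leaf_perm G ord (length ns) X) ns (map (\<lambda>i. leaf_perm G ord (ns ! i) (Ys ! i)) [0..<length ns])"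
proof
  fix x
  obtain t where t: "wft (gens G ord) (length ns) t" "X = cls G ord t" using X by (rule FO_cases)
  obtain ts where ts: "length ts = length ns" "\<And>j. j < length ns \<Longrightarrow> wft (gens G ord) (ns ! j) (ts ! j)"
    and Ys: "Ys = map (cls G ord) ts"
    using FO_list_cases[OF len Y] by blast
  note comp = subst_in_FO_comp[of t ns ts]
  show "leaf_perm G ord (sum_list ns) (FO_comp G ord X ns Ys) x =
     PG_comp G (leaf_perm G ord (length ns) X) ns (map (\<lambda>i. leaf_perm G ord (ns ! i) (Ys ! i)) [0..<length ns]) x"
  proof (cases "x \<in> carrier G")
    case True
    have "leaf_perm G ord (sum_list ns) (FO_comp G ord X ns Ys) x
            = perm_of_list (sum_list ns) (concat (map (\<lambda>j. map (\<lambda>i. sum_list (take j ns) + i)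
                                                   (leaf_word G ord (ts ! j) x)) (leaf_word G ord t x)))"
      unfolding t(2) Ys using leaf_perm_eqI[OF comp leaf_word_FO_comp[OF t(1) ts _ True] True] .
    also have "\<dots> = assoc_comp (perm_of_list (length ns) (leaf_word G ord t x)) ns
                      (map (\<lambda>j. perm_of_list (ns ! j) (leaf_word G ord (ts ! j) x)) [0..<length ns])"
      using leaf_word_wft[OF t(1) True] leaf_word_wft(3)[OF ts(2) True]
      by (intro assoc_comp_perm_of_list[symmetric])
    also have "\<dots> = PG_comp G (leaf_perm G ord (length ns) X) ns
                      (map (\<lambda>i. leaf_perm G ord (ns ! i) (Ys ! i)) [0..<length ns]) x"
    proof -
      have eq: "map (\<lambda>i. leaf_perm G ord (ns ! i) (Ys ! i) x) [0..<length ns]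
              = map (\<lambda>j. perm_of_list (ns ! j) (leaf_word G ord (ts ! j) x)) [0..<length ns]"
        using True ts(1) by (auto simp: Ys leaf_perm_cls)
      show ?thesis using True by (simp add: PG_comp_def t(2) leaf_perm_cls o_def eq)
    qed
    finally show ?thesis .
  qed (simp add: leaf_perm_def PG_comp_def)
qed

lemma operad_map_leaf_perm: "operad_map G ord (leaf_perm G ord)"
  unfolding operad_map_def using leaf_perm_unit
  by (simp add: is_functor_chaotic leaf_perm_PG leaf_perm_equivariant leaf_perm_comp)

end


section \<open>Fixed points of graph subgroups in the free operad\<close>

lemma (in group) PG_fixed_point_graph:
  assumes f: "f \<in> PG G n" and fixed: "PG_act G (\<one>,\<tau>) f = f"
  shows "\<tau> = id"
proof
  fix y
  have "f \<one> permutes {..<n}" using f unfolding PG_def perms_def by auto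
  then obtain z where "y = f \<one> z" by (metis permutes_surj surjD)
  moreover have "\<tau> \<circ> f \<one> = f \<one>" using fun_cong[OF fixed, of \<one>] by (simp add: PG_act_def)
  ultimately show "\<tau> y = id y" by (metis comp_apply id_apply)
qed

text \<open>Such a \<Lambda> is the graph of the permutation action \<sigma>\<Lambda> of H\<Lambda> = fst ` \<Lambda> on {0..<n}.\<close>

locale graph_subgroup = ordered_exponents +
  fixes n :: nat and \<Lambda>
  assumes subgroup_GS: "subgroup_GS G n \<Lambda>" and graph: "\<And>\<tau>. (\<one>,\<tau>) \<in> \<Lambda> \<Longrightarrow> \<tau> = id"
begin

definition H\<Lambda> :: "'a set" where "H\<Lambda> = fst ` \<Lambda>"

definition \<sigma>\<Lambda> :: "'a \<Rightarrow> nat \<Rightarrow> nat" where "\<sigma>\<Lambda> h = (THE \<sigma>. (h,\<sigma>) \<in> \<Lambda>)"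

lemma \<Lambda>_subset: "\<Lambda> \<subseteq> carrier G \<times> perms n"
  and \<Lambda>_one: "(\<one>, id) \<in> \<Lambda>"
  and \<Lambda>_mult: "(a,\<sigma>) \<in> \<Lambda> \<Longrightarrow> (b,\<rho>) \<in> \<Lambda> \<Longrightarrow> (a \<otimes> b, \<sigma> \<circ> \<rho>) \<in> \<Lambda>"
  and \<Lambda>_inv: "(a,\<sigma>) \<in> \<Lambda> \<Longrightarrow> (inv a, Hilbert_Choice.inv \<sigma>) \<in> \<Lambda>"
  using subgroup_GS unfolding subgroup_GS_def by blast+

lemma \<Lambda>_unique:
  assumes "(a,\<sigma>) \<in> \<Lambda>" "(a,\<sigma>') \<in> \<Lambda>"
  shows "\<sigma> = \<sigma>'"
proof -
  have a: "a \<in> carrier G" and p: "\<sigma>' permutes {..<n}" using assms \<Lambda>_subset by (auto simp: perms_def)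
  have "\<sigma> \<circ> Hilbert_Choice.inv \<sigma>' = id" using graph \<Lambda>_mult[OF assms(1) \<Lambda>_inv[OF assms(2)]] a by simp
  then have "\<sigma> \<circ> Hilbert_Choice.inv \<sigma>' \<circ> \<sigma>' = \<sigma>'" by simp
  then show ?thesis using permutes_inv_o(2)[OF p] by (simp add: o_assoc[symmetric])
qed

lemma \<sigma>\<Lambda>_eq: "(h,\<sigma>) \<in> \<Lambda> \<Longrightarrow> \<sigma>\<Lambda> h = \<sigma>"
  unfolding \<sigma>\<Lambda>_def by (rule the_equality) (auto dest: \<Lambda>_unique)

lemma graph_mem: "h \<in> H\<Lambda> \<Longrightarrow> (h, \<sigma>\<Lambda> h) \<in> \<Lambda>"
  unfolding H\<Lambda>_def using \<sigma>\<Lambda>_eq by force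

lemma H\<Lambda>_carrier: "h \<in> H\<Lambda> \<Longrightarrow> h \<in> carrier G"
  unfolding H\<Lambda>_def using \<Lambda>_subset by auto

lemma \<sigma>\<Lambda>_perms: "h \<in> H\<Lambda> \<Longrightarrow> \<sigma>\<Lambda> h \<in> perms n"
  using graph_mem \<Lambda>_subset by auto

lemma \<sigma>\<Lambda>_mult: "h1 \<in> H\<Lambda> \<Longrightarrow> h2 \<in> H\<Lambda> \<Longrightarrow> h1 \<otimes> h2 \<in> H\<Lambda> \<and> \<sigma>\<Lambda> (h1 \<otimes> h2) = \<sigma>\<Lambda> h1 \<circ> \<sigma>\<Lambda> h2"
proof -
  assume "h1 \<in> H\<Lambda>" "h2 \<in> H\<Lambda>"
  then have "(h1 \<otimes> h2, \<sigma>\<Lambda> h1 \<circ> \<sigma>\<Lambda> h2) \<in> \<Lambda>" using \<Lambda>_mult[OF graph_mem graph_mem] by blast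
  then show ?thesis unfolding H\<Lambda>_def using \<sigma>\<Lambda>_eq by force
qed

lemma \<sigma>\<Lambda>_one: "\<one> \<in> H\<Lambda> \<and> \<sigma>\<Lambda> \<one> = id"
  using \<Lambda>_one \<sigma>\<Lambda>_eq[OF \<Lambda>_one] unfolding H\<Lambda>_def by force

lemma H\<Lambda>_inv: "h \<in> H\<Lambda> \<Longrightarrow> inv h \<in> H\<Lambda>"
  using \<Lambda>_inv[OF graph_mem] unfolding H\<Lambda>_def by force

lemma \<sigma>\<Lambda>_inv_apply: "h \<in> H\<Lambda> \<Longrightarrow> \<sigma>\<Lambda> (inv h) (\<sigma>\<Lambda> h x) = x"
proof -
  assume h: "h \<in> H\<Lambda>"
  have "\<sigma>\<Lambda> (inv h) \<circ> \<sigma>\<Lambda> h = \<sigma>\<Lambda> (inv h \<otimes> h)" using \<sigma>\<Lambda>_mult[OF H\<Lambda>_inv[OF h] h] by simp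
  also have "\<dots> = id" using \<sigma>\<Lambda>_one H\<Lambda>_carrier[OF h] by simp
  finally show ?thesis by (metis comp_apply id_apply)
qed

lemma subgroup_H\<Lambda>: "subgroup H\<Lambda> G"
proof
  show "H\<Lambda> \<subseteq> carrier G" using H\<Lambda>_carrier by blast
  show "x \<otimes> y \<in> H\<Lambda>" if "x \<in> H\<Lambda>" "y \<in> H\<Lambda>" for x y using \<sigma>\<Lambda>_mult that by blast
  show "\<one> \<in> H\<Lambda>" using \<sigma>\<Lambda>_one by blast
  show "inv x \<in> H\<Lambda>" if "x \<in> H\<Lambda>" for x using H\<Lambda>_inv that by blast
qed

definition fixed_tree :: "'a gen tree \<Rightarrow> bool" where
  "fixed_tree T \<longleftrightarrow> (\<forall>h\<in>H\<Lambda>. teqG G ord (relabel (\<sigma>\<Lambda> h) (maplab (gen_act G (h,id)) T)) T)"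

definition stab :: "nat \<Rightarrow> 'a set" where "stab p = {h \<in> H\<Lambda>. \<sigma>\<Lambda> h p = p}"

definition orbit :: "nat \<Rightarrow> nat set" where "orbit p = (\<lambda>h. \<sigma>\<Lambda> h p) ` H\<Lambda>"

lemma subgroup_stab: "subgroup (stab p) G"
proof
  show "stab p \<subseteq> carrier G" "\<one> \<in> stab p"
    unfolding stab_def using H\<Lambda>_carrier \<sigma>\<Lambda>_one by auto
  show "x \<otimes> y \<in> stab p" if "x \<in> stab p" "y \<in> stab p" for x y
    using that \<sigma>\<Lambda>_mult unfolding stab_def by auto
  show "inv x \<in> stab p" if "x \<in> stab p" for x
    using that \<sigma>\<Lambda>_inv_apply[of x p] H\<Lambda>_inv unfolding stab_def by auto
qed

lemma l_coset_stab_eq_iff: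
  assumes h: "h \<in> H\<Lambda>" and h': "h' \<in> H\<Lambda>"
  shows "h <# stab p = h' <# stab p \<longleftrightarrow> \<sigma>\<Lambda> h p = \<sigma>\<Lambda> h' p"
proof
  assume e: "h <# stab p = h' <# stab p"
  have "h' \<in> h' <# stab p"
    unfolding l_coset_def using subgroup.one_closed[OF subgroup_stab] H\<Lambda>_carrier[OF h'] by force
  then have "h' \<in> h <# stab p" using e by simp
  then obtain k where "k \<in> stab p" "h' = h \<otimes> k" unfolding l_coset_def by blast
  then show "\<sigma>\<Lambda> h p = \<sigma>\<Lambda> h' p" using \<sigma>\<Lambda>_mult[OF h] unfolding stab_def by auto
next
  assume e: "\<sigma>\<Lambda> h p = \<sigma>\<Lambda> h' p"
  have k: "inv h \<otimes> h' \<in> H\<Lambda>" using \<sigma>\<Lambda>_mult[OF H\<Lambda>_inv[OF h] h'] by simp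
  have "\<sigma>\<Lambda> (inv h \<otimes> h') p = p"
    using \<sigma>\<Lambda>_mult[OF H\<Lambda>_inv[OF h] h'] e[symmetric] \<sigma>\<Lambda>_inv_apply[OF h] by simp
  then have "inv h \<otimes> h' \<in> stab p" unfolding stab_def using k by simp
  moreover have "h' = h \<otimes> (inv h \<otimes> h')"
    using H\<Lambda>_carrier h h' by (simp add: m_assoc[symmetric])
  ultimately have "h' \<in> h <# stab p" unfolding l_coset_def by blast
  then show "h <# stab p = h' <# stab p"
    using l_repr_independence[OF _ H\<Lambda>_carrier[OF h] subgroup_stab] by blast
qed

end


context graph_subgroup
begin

context
  fixes p assumes stab_psubset: "stab p \<subset> H\<Lambda>"
begin

abbreviation "orbit_card \<equiv> card (lcos G H\<Lambda> (stab p))"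

lemmas permrep_stab_spec = permrep_spec[OF subgroup_H\<Lambda> subgroup_stab stab_psubset]
lemmas permrep_stab_mult = permrep_mult[OF subgroup_H\<Lambda> subgroup_stab stab_psubset]
lemmas permrep_stab_inv_cancel = permrep_inv_cancel[OF subgroup_H\<Lambda> subgroup_stab stab_psubset]

definition orbit_rep :: "nat \<Rightarrow> 'a" where
  "orbit_rep i = (SOME h. h \<in> H\<Lambda> \<and> ord H\<Lambda> (stab p) i = h <# stab p)"

definition orbit_point :: "nat \<Rightarrow> nat" where "orbit_point i = \<sigma>\<Lambda> (orbit_rep i) p"

definition orbit_gen :: "'a gen" where
  "orbit_gen = (EO H\<Lambda> (stab p), Gamma G ord (EO H\<Lambda> (stab p)))"

definition orbit_corolla :: "'a gen tree" where
  "orbit_corolla = Node orbit_gen (map (\<lambda>i. Leaf (orbit_point i)) [0..<orbit_card])"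

lemma orbit_rep_spec: "i < orbit_card \<Longrightarrow> orbit_rep i \<in> H\<Lambda> \<and> ord H\<Lambda> (stab p) i = orbit_rep i <# stab p"
proof -
  assume "i < orbit_card"
  then have "\<exists>h. h \<in> H\<Lambda> \<and> ord H\<Lambda> (stab p) i = h <# stab p"
    using ord_in_lcos[OF subgroup_H\<Lambda> subgroup_stab stab_psubset] unfolding lcos_def by blast
  then show ?thesis unfolding orbit_rep_def by (rule someI_ex)
qed

lemma orbit_point_inj: "i < orbit_card \<Longrightarrow> j < orbit_card \<Longrightarrow> orbit_point i = orbit_point j \<Longrightarrow> i = j"
proof -
  assume ij: "i < orbit_card" "j < orbit_card" "orbit_point i = orbit_point j"
  then have "orbit_rep i <# stab p = orbit_rep j <# stab p"
    using l_coset_stab_eq_iff orbit_rep_spec unfolding orbit_point_def by blast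
  then show "i = j"
    using ij orbit_rep_spec ord_inj[OF subgroup_H\<Lambda> subgroup_stab stab_psubset] by metis
qed

lemma orbit_point_image: "orbit_point ` {..<orbit_card} = orbit p"
proof
  show "orbit_point ` {..<orbit_card} \<subseteq> orbit p"
    unfolding orbit_point_def orbit_def using orbit_rep_spec by auto
  show "orbit p \<subseteq> orbit_point ` {..<orbit_card}"
  proof
    fix q assume "q \<in> orbit p"
    then obtain h where h: "h \<in> H\<Lambda>" "q = \<sigma>\<Lambda> h p" unfolding orbit_def by blast
    then obtain i where i: "i < orbit_card" "ord H\<Lambda> (stab p) i = h <# stab p"
      using ord_surj[OF subgroup_H\<Lambda> subgroup_stab stab_psubset] unfolding lcos_def by blast
    then have "orbit_point i = q"
      using l_coset_stab_eq_iff[of "orbit_rep i" h p] orbit_rep_spec[OF i(1)] h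
      unfolding orbit_point_def by simp
    then show "q \<in> orbit_point ` {..<orbit_card}" using i(1) by blast
  qed
qed

lemma orbit_point_permrep:
  assumes h: "h \<in> H\<Lambda>" and i: "i < orbit_card"
  shows "orbit_point (permrep G ord H\<Lambda> (stab p) h i) = \<sigma>\<Lambda> h (orbit_point i)"
proof -
  let ?j = "permrep G ord H\<Lambda> (stab p) h i"
  have j: "?j < orbit_card" "ord H\<Lambda> (stab p) ?j = h <# ord H\<Lambda> (stab p) i"
    using permrep_stab_spec[OF h i] by auto
  have "orbit_rep ?j <# stab p = h <# (orbit_rep i <# stab p)"
    using orbit_rep_spec[OF j(1)] j(2) orbit_rep_spec[OF i] by simp
  also have "\<dots> = (h \<otimes> orbit_rep i) <# stab p"
    using lcos_m_assoc[OF subgroup.subset[OF subgroup_stab]] H\<Lambda>_carrier h orbit_rep_spec[OF i] by simp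
  finally have "\<sigma>\<Lambda> (orbit_rep ?j) p = \<sigma>\<Lambda> (h \<otimes> orbit_rep i) p"
    using l_coset_stab_eq_iff orbit_rep_spec[OF j(1)] \<sigma>\<Lambda>_mult[OF h] orbit_rep_spec[OF i] by blast
  then show ?thesis unfolding orbit_point_def using \<sigma>\<Lambda>_mult[OF h] orbit_rep_spec[OF i] by simp
qed

lemma EO_stab_expos: "EO H\<Lambda> (stab p) \<in> expos G"
  using subgroup_H\<Lambda> subgroup_stab stab_psubset by (simp add: EO_expos_iff)

lemma orbit_gen_coset: "orbit_gen = (EO H\<Lambda> (stab p), coset_GS G (Gamma G ord (EO H\<Lambda> (stab p))) \<one> id)"
  unfolding orbit_gen_def coset_GS_def using H\<Lambda>_carrier by force

lemma orbit_gen_gens: "orbit_gen \<in> gens G ord orbit_card"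
  unfolding gens_def cosets_GS_conv orbit_gen_coset using EO_stab_expos by force

lemma coset_GS_orbit_gen_shift:
  assumes h: "h \<in> H\<Lambda>"
  shows "coset_GS G (Gamma G ord (EO H\<Lambda> (stab p))) h id
           = coset_GS G (Gamma G ord (EO H\<Lambda> (stab p))) \<one> (permrep G ord H\<Lambda> (stab p) (inv h))"
  (is "?L = ?R")
proof (intro equalityI subsetI)
  let ?P = "permrep G ord H\<Lambda> (stab p)"
  have hi: "inv h \<in> H\<Lambda>" using H\<Lambda>_inv[OF h] .
  fix z
  {
    assume "z \<in> ?L"
    then obtain b where b: "b \<in> H\<Lambda>" "z = (h \<otimes> b, ?P b)" by (auto elim: coset_GS_memE)
    have hb: "h \<otimes> b \<in> H\<Lambda>" using \<sigma>\<Lambda>_mult[OF h b(1)] by simp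
    have "?P (inv h) \<circ> ?P (h \<otimes> b) = ?P b"
      using permrep_stab_mult[OF hi hb] H\<Lambda>_carrier h b(1) by (simp add: m_assoc[symmetric])
    then show "z \<in> ?R"
      using coset_GS_memI[of "h \<otimes> b" "?P (h \<otimes> b)" _ G \<one> "?P (inv h)"] hb b(2) H\<Lambda>_carrier by simp
  next
    assume "z \<in> ?R"
    then obtain b where b: "b \<in> H\<Lambda>" "z = (b, ?P (inv h) \<circ> ?P b)"
      using H\<Lambda>_carrier by (auto elim: coset_GS_memE)
    have hb: "inv h \<otimes> b \<in> H\<Lambda>" using \<sigma>\<Lambda>_mult[OF hi b(1)] by simp
    have "h \<otimes> (inv h \<otimes> b) = b" using H\<Lambda>_carrier h b(1) by (simp add: m_assoc[symmetric])
    then show "z \<in> ?L"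
      using coset_GS_memI[of "inv h \<otimes> b" "?P (inv h \<otimes> b)" _ G h id] hb b(2) permrep_stab_mult[OF hi b(1)]
      by simp
  }
qed

lemma gen_act_orbit_gen:
  "h \<in> H\<Lambda> \<Longrightarrow> gen_act G (h,id) orbit_gen = gen_act G (\<one>, permrep G ord H\<Lambda> (stab p) (inv h)) orbit_gen"
  unfolding orbit_gen_coset
  using gen_act_coset[OF EO_stab_expos one_closed] coset_GS_orbit_gen_shift H\<Lambda>_carrier by simp

lemma orbit_corolla_nodes_ok: "nodes_ok (gens G ord) orbit_corolla"
  unfolding orbit_corolla_def using orbit_gen_gens by simp

lemma leaves_orbit_corolla: "leaves orbit_corolla = map orbit_point [0..<orbit_card]"
  unfolding orbit_corolla_def by (simp add: o_def)

lemma distinct_leaves_orbit_corolla: "distinct (leaves orbit_corolla)"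
  unfolding leaves_orbit_corolla distinct_map using orbit_point_inj by (auto simp: inj_on_def)

lemma set_leaves_orbit_corolla: "set (leaves orbit_corolla) = orbit p"
  unfolding leaves_orbit_corolla using orbit_point_image by (simp add: atLeast0LessThan)

text \<open>Acting by (h, \<sigma>\<Lambda> h) relabels the generator by (1, \<sigma>_T(h\<inverse>)), which the equivariance relation
  moves onto the leaves, where it cancels \<sigma>\<Lambda> h.\<close>

lemma orbit_corolla_fixed: "fixed_tree orbit_corolla"
  unfolding fixed_tree_def
proof
  fix h assume h: "h \<in> H\<Lambda>"
  let ?P = "permrep G ord H\<Lambda> (stab p)"
  let ?cs = "map (\<lambda>i. Leaf (\<sigma>\<Lambda> h (orbit_point i))) [0..<orbit_card]"
  have hi: "inv h \<in> H\<Lambda>" using H\<Lambda>_inv[OF h] .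
  have R: "relabel (\<sigma>\<Lambda> h) (maplab (gen_act G (h, id)) orbit_corolla)
            = Node (gen_act G (\<one>, ?P (inv h)) orbit_gen) ?cs"
    unfolding orbit_corolla_def using gen_act_orbit_gen[OF h] by simp
  have A: "teqG G ord (Node (gen_act G (\<one>, ?P (inv h)) orbit_gen) ?cs)
          (Node orbit_gen (map (\<lambda>i. ?cs ! ?P (inv h) i) [0..<orbit_card]))"
    unfolding teqG_def
    by (rule teq.teq_equiv) (use orbit_gen_gens permrep_perms[OF subgroup_H\<Lambda> subgroup_stab stab_psubset hi] in simp_all)
  have B: "map (\<lambda>i. ?cs ! ?P (inv h) i) [0..<orbit_card] = map (\<lambda>i. Leaf (orbit_point i)) [0..<orbit_card]"
  proof (rule map_cong[OF refl])
    fix i assume "i \<in> set [0..<orbit_card]"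
    then have i: "i < orbit_card" by simp
    have j: "?P (inv h) i < orbit_card" using permrep_stab_spec[OF hi i] by simp
    have "?P h (?P (inv h) i) = i" using permrep_stab_inv_cancel[OF h] by (metis comp_apply id_apply)
    then show "?cs ! ?P (inv h) i = Leaf (orbit_point i)"
      using j orbit_point_permrep[OF h j] by simp
  qed
  show "teqG G ord (relabel (\<sigma>\<Lambda> h) (maplab (gen_act G (h, id)) orbit_corolla)) orbit_corolla"
    unfolding R using A unfolding B orbit_corolla_def[symmetric] .
qed

end

end


context graph_subgroup
begin

lemma fixed_tree_cls:
  assumes T: "fixed_tree T" and h: "h \<in> H\<Lambda>"
  shows "FO_act G ord (h, \<sigma>\<Lambda> h) (cls G ord T) = cls G ord T"
proof -
  have fx: "teqG G ord (relabel (\<sigma>\<Lambda> h) (maplab (gen_act G (h,id)) T)) T"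
    using T h unfolding fixed_tree_def by blast
  have "teqG G ord u (relabel (\<sigma>\<Lambda> h) (maplab (gen_act G (h,id)) t)) \<longleftrightarrow> teqG G ord u T"
    if "teqG G ord t T" for u t
    using teqG_relabel[OF teqG_maplab[OF that H\<Lambda>_carrier[OF h]]] fx teqG_trans teqG_sym by blast
  then show ?thesis unfolding FO_act_def cls_def using teqG_refl by auto
qed

lemma fixed_tree_FO_fixed:
  assumes "fixed_tree T" and "wft (gens G ord) n T"
  shows "\<exists>X\<in>FO G ord n. \<forall>l\<in>\<Lambda>. FO_act G ord l X = X"
proof -
  have "FO_act G ord l (cls G ord T) = cls G ord T" if "l \<in> \<Lambda>" for l
  proof -
    obtain h \<sigma> where l: "l = (h,\<sigma>)" by (cases l)
    then have "h \<in> H\<Lambda>" "\<sigma> = \<sigma>\<Lambda> h" unfolding H\<Lambda>_def using that \<sigma>\<Lambda>_eq by force+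
    then show ?thesis using fixed_tree_cls[OF assms(1)] l by simp
  qed
  moreover have "cls G ord T \<in> FO G ord n" unfolding FO_def using assms(2) by blast
  ultimately show ?thesis by blast
qed

lemma coset_GS_trivial:
  assumes a: "a \<in> carrier G"
  shows "coset_GS G (carrier G \<times> {id}) a \<sigma> = carrier G \<times> {\<sigma>}"
proof (intro equalityI subsetI)
  fix z assume "z \<in> coset_GS G (carrier G \<times> {id}) a \<sigma>"
  then show "z \<in> carrier G \<times> {\<sigma>}" using a by (auto elim: coset_GS_memE)
next
  fix z assume "z \<in> carrier G \<times> {\<sigma>}"
  then obtain g where g: "g \<in> carrier G" "z = (g, \<sigma>)" by auto
  then have "a \<otimes> (inv a \<otimes> g) = g" using a by (simp add: m_assoc[symmetric])
  then show "z \<in> coset_GS G (carrier G \<times> {id}) a \<sigma>"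
    using coset_GS_memI[of "inv a \<otimes> g" id "carrier G \<times> {id}" G a \<sigma>] a g by simp
qed

definition const_gen :: "'a expo \<Rightarrow> 'a gen" where "const_gen e = (e, carrier G \<times> {id})"

lemma const_gen_gens:
  assumes e: "e = E0 \<or> e = E2"
  shows "const_gen e \<in> gens G ord (arity G e)"
proof -
  have "coset_GS G (Gamma G ord e) \<one> id \<in> cosets_GS G (arity G e) (Gamma G ord e)"
    unfolding cosets_GS_conv using perms_id by blast
  moreover have "Gamma G ord e = carrier G \<times> {id}" using e by auto
  ultimately have "carrier G \<times> {id} \<in> cosets_GS G (arity G e) (Gamma G ord e)"
    using coset_GS_trivial[OF one_closed] by simp
  moreover have "e \<in> expos G" using e unfolding expos_def by auto
  ultimately show ?thesis unfolding gens_def const_gen_def by simp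
qed

lemma gen_act_const_gen:
  assumes h: "h \<in> carrier G"
  shows "gen_act G (h,id) (const_gen e) = const_gen e"
proof -
  have "coset_act G (h,id) (carrier G \<times> {id}) = coset_GS G (carrier G \<times> {id}) h id"
    unfolding coset_act_def coset_GS_def by simp
  then show ?thesis unfolding gen_act_def const_gen_def using coset_GS_trivial[OF h] by simp
qed

lemma fixed_tree_Leaf: "\<forall>h\<in>H\<Lambda>. \<sigma>\<Lambda> h p = p \<Longrightarrow> fixed_tree (Leaf p)"
  unfolding fixed_tree_def by (simp add: teqG_refl)

lemma fixed_tree_nullary: "fixed_tree (Node (const_gen E0) [])"
  unfolding fixed_tree_def using gen_act_const_gen H\<Lambda>_carrier by (simp add: teqG_refl)

lemma fixed_tree_binary:
  assumes "fixed_tree T1" "fixed_tree T2"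
  shows "fixed_tree (Node (const_gen E2) [T1, T2])"
  unfolding fixed_tree_def
proof
  fix h assume h: "h \<in> H\<Lambda>"
  let ?a = "\<lambda>T. relabel (\<sigma>\<Lambda> h) (maplab (gen_act G (h,id)) T)"
  have "list_all2 (teqG G ord) [?a T1, ?a T2] [T1, T2]"
    using assms h unfolding fixed_tree_def by auto
  then have "teqG G ord (Node (const_gen E2) [?a T1, ?a T2]) (Node (const_gen E2) [T1, T2])"
    unfolding teqG_def by (rule teq.teq_cong)
  then show "teqG G ord (?a (Node (const_gen E2) [T1, T2])) (Node (const_gen E2) [T1, T2])"
    using gen_act_const_gen H\<Lambda>_carrier[OF h] by simp
qed

lemma orbit_self: "p \<in> orbit p"
  unfolding orbit_def using \<sigma>\<Lambda>_one by force

lemma orbit_tree_exists: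
  "\<exists>T. nodes_ok (gens G ord) T \<and> distinct (leaves T) \<and> set (leaves T) = orbit p \<and> fixed_tree T"
proof (cases "\<forall>h\<in>H\<Lambda>. \<sigma>\<Lambda> h p = p")
  case True
  then have "orbit p = {p}" unfolding orbit_def using \<sigma>\<Lambda>_one by auto
  then show ?thesis using fixed_tree_Leaf[OF True] by (intro exI[of _ "Leaf p"]) simp
next
  case False
  then have "stab p \<subset> H\<Lambda>" unfolding stab_def by blast
  then show ?thesis
    using orbit_corolla_nodes_ok distinct_leaves_orbit_corolla set_leaves_orbit_corolla
      orbit_corolla_fixed by blast
qed

lemma orbit_complement_invariant:
  assumes "\<forall>h\<in>H\<Lambda>. \<forall>x\<in>A. \<sigma>\<Lambda> h x \<in> A"
  shows "\<forall>h\<in>H\<Lambda>. \<forall>x\<in>A - orbit p. \<sigma>\<Lambda> h x \<in> A - orbit p"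
proof (intro ballI)
  fix h x assume h: "h \<in> H\<Lambda>" and x: "x \<in> A - orbit p"
  have "\<sigma>\<Lambda> h x \<notin> orbit p"
  proof
    assume "\<sigma>\<Lambda> h x \<in> orbit p"
    then obtain g where g: "g \<in> H\<Lambda>" "\<sigma>\<Lambda> h x = \<sigma>\<Lambda> g p" unfolding orbit_def by blast
    then have "x = \<sigma>\<Lambda> (inv h \<otimes> g) p"
      using \<sigma>\<Lambda>_inv_apply[OF h, of x] \<sigma>\<Lambda>_mult[OF H\<Lambda>_inv[OF h] g(1)] by simp
    then show False using x \<sigma>\<Lambda>_mult[OF H\<Lambda>_inv[OF h] g(1)] unfolding orbit_def by blast
  qed
  then show "\<sigma>\<Lambda> h x \<in> A - orbit p" using assms h x by blast
qed

lemma invariant_tree_exists: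
  assumes "finite A" "A \<noteq> {}" "\<forall>h\<in>H\<Lambda>. \<forall>x\<in>A. \<sigma>\<Lambda> h x \<in> A"
  shows "\<exists>T. nodes_ok (gens G ord) T \<and> distinct (leaves T) \<and> set (leaves T) = A \<and> fixed_tree T"
  using assms
proof (induction "card A" arbitrary: A rule: less_induct)
  case less
  obtain p where p: "p \<in> A" using less.prems(2) by blast
  have orbit_A: "orbit p \<subseteq> A" using p less.prems(3) unfolding orbit_def by blast
  obtain T where T: "nodes_ok (gens G ord) T" "distinct (leaves T)" "set (leaves T) = orbit p" "fixed_tree T"
    using orbit_tree_exists by blast
  show ?case
  proof (cases "orbit p = A")
    case True
    then show ?thesis using T by blast
  next
    case False
    have "card (A - orbit p) < card A"
      using less.prems(1) orbit_self[of p] p by (intro psubset_card_mono) auto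
    then obtain T' where T': "nodes_ok (gens G ord) T'" "distinct (leaves T')"
      "set (leaves T') = A - orbit p" "fixed_tree T'"
      using less.hyps[of "A - orbit p"] less.prems orbit_complement_invariant False orbit_A by blast
    have "nodes_ok (gens G ord) (Node (const_gen E2) [T, T'])"
      using T(1) T'(1) const_gen_gens[of E2] by (simp add: numeral_2_eq_2)
    moreover have "distinct (leaves (Node (const_gen E2) [T, T']))" "set (leaves (Node (const_gen E2) [T, T'])) = A"
      using T(2,3) T'(2,3) orbit_A by auto
    ultimately show ?thesis using fixed_tree_binary[OF T(4) T'(4)] by blast
  qed
qed

lemma FO_fixed_point_exists: "\<exists>X\<in>FO G ord n. \<forall>l\<in>\<Lambda>. FO_act G ord l X = X"
proof (cases "n = 0")
  case True
  then have "wft (gens G ord) n (Node (const_gen E0) [])"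
    unfolding wft_def using const_gen_gens[of E0] by simp
  then show ?thesis using fixed_tree_FO_fixed fixed_tree_nullary by blast
next
  case False
  have "\<forall>h\<in>H\<Lambda>. \<forall>x\<in>{..<n}. \<sigma>\<Lambda> h x \<in> {..<n}" using \<sigma>\<Lambda>_perms perms_lessThan by simp
  then obtain T where "nodes_ok (gens G ord) T" "distinct (leaves T)" "set (leaves T) = {..<n}" "fixed_tree T"
    using invariant_tree_exists[of "{..<n}"] False by auto
  then show ?thesis using fixed_tree_FO_fixed unfolding wft_def by blast
qed

end

context ordered_exponents
begin

lemma FO_fixed_point_if_PG_fixed_point:
  assumes "subgroup_GS G n \<Lambda>" and "f \<in> PG G n" and "\<forall>l\<in>\<Lambda>. PG_act G l f = f"
  shows "\<exists>X\<in>FO G ord n. \<forall>l\<in>\<Lambda>. FO_act G ord l X = X"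
proof -
  interpret graph_subgroup G ord n \<Lambda>
    by unfold_locales (use assms PG_fixed_point_graph in blast)+
  show ?thesis by (rule FO_fixed_point_exists)
qed

lemma operad_map_fixed_point:
  assumes \<Phi>: "operad_map G ord \<Phi>" and \<Lambda>: "subgroup_GS G n \<Lambda>"
    and X: "X \<in> FO G ord n" "\<forall>l\<in>\<Lambda>. FO_act G ord l X = X"
  shows "\<Phi> n X \<in> PG G n \<and> (\<forall>l\<in>\<Lambda>. PG_act G l (\<Phi> n X) = \<Phi> n X)"
proof -
  have "\<Phi> n X \<in> PG G n"
    using \<Phi> X(1) unfolding operad_map_def is_functor_def chaotic_def by simp
  moreover have "PG_act G (a,\<tau>) (\<Phi> n X) = \<Phi> n X" if l: "(a,\<tau>) \<in> \<Lambda>" for a \<tau>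
  proof -
    have "a \<in> carrier G" "\<tau> \<in> perms n" using l \<Lambda> unfolding subgroup_GS_def by auto
    then have "\<Phi> n (FO_act G ord (a,\<tau>) X) = PG_act G (a,\<tau>) (\<Phi> n X)"
      using \<Phi> X(1) unfolding operad_map_def by blast
    then show ?thesis using X(2) l by simp
  qed
  ultimately show ?thesis by auto
qed

end

theorem proposition4p13:
  fixes G :: "('g, 'b) monoid_scheme" and ord :: "'g ordering"
  assumes "group G" and "finite (carrier G)"
    and "orderings_ok G ord"
  shows "(\<exists>\<Phi>. operad_map G ord \<Phi>) \<and>
         (\<forall>\<Phi>. operad_map G ord \<Phi> \<longrightarrow>
            (\<forall>n \<Lambda>. subgroup_GS G n \<Lambda> \<longrightarrow>
               is_equivalence
                 (fixsub (chaotic (FO G ord n)) (FO_act G ord)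
                         (\<lambda>l. map_prod (FO_act G ord l) (FO_act G ord l)) \<Lambda>)
                 (fixsub (chaotic (PG G n)) (PG_act G)
                         (\<lambda>l. map_prod (PG_act G l) (PG_act G l)) \<Lambda>)
                 (\<Phi> n) (chaotic_functor (\<Phi> n))))"
proof -
  interpret ordered_exponents G ord
    using assms(1,3) by (simp add: ordered_exponents_def ordered_exponents_axioms_def)
  have "is_equivalence
          (fixsub (chaotic (FO G ord n)) (FO_act G ord) (\<lambda>l. map_prod (FO_act G ord l) (FO_act G ord l)) \<Lambda>)
          (fixsub (chaotic (PG G n)) (PG_act G) (\<lambda>l. map_prod (PG_act G l) (PG_act G l)) \<Lambda>)
          (\<Phi> n) (chaotic_functor (\<Phi> n))"
    if "operad_map G ord \<Phi>" and "subgroup_GS G n \<Lambda>" for \<Phi> n \<Lambda>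
    using operad_map_fixed_point[OF that] FO_fixed_point_if_PG_fixed_point[OF that(2)]
    by (intro is_equivalence_fixsub_chaotic) blast+
  then show ?thesis using operad_map_leaf_perm by blast
qed

end
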